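(* Assume (A1) and (A2), and let $\bar Z\in\mathcal{Z}_\star$. The map $T:=\mathrm{Id}+\delta'(\bar Z;\cdot):\mathbb{S}^n\to\mathbb{S}^n$ is firmly nonexpansive, i.e. $$\|T(H)-T(G)\|_F^2+\|(\mathrm{Id}-T)(H)-(\mathrm{Id}-T)(G)\|_F^2\le\|H-G\|_F^2\quad\text{for all }H,G\in\mathbb{S}^n.$$ Moreover, for any $H^{(0)}\in\mathbb{S}^n$, the sequence $H^{(k+1)}:=T(H^{(k)})$ converges to a fixed point of $T$.
   Context: Notation: $\mathbb{S}^n$ is the space of real symmetric $n\times n$ matrices with $\langle A,B\rangle=\mathrm{tr}(AB)$ and Frobenius norm $\|\cdot\|_F$. $\Pi_+$, $\Pi_-$ are the orthogonal projections onto the PSD and NSD cones, and $F'(Z;H):=\lim_{t\downarrow0}(F(Z+tH)-F(Z))/t$ for $F\in\{\Pi_+,\Pi_-\}$. SDP data $C,A_1,\dots,A_m\in\mathbb{S}^n$, $b\in\mathbb{R}^m$ define $\mathcal{A}X:=(\langle A_i,X\rangle)_i$ and $\mathcal{A}^*y:=\sum_iy_iA_i$. A KKT point is $(X,y,S)$ with $\mathcal{A}X=b$, $\mathcal{A}^*y+S=C$, $X,S\succeq0$, $\langle X,S\rangle=0$. $\mathcal{X}_\star$, $\mathcal{S}_\star$ are the sets of $X$, resp. $S$, in KKT points. (A1) $\mathcal{A}$ is surjective. (A2) Some KKT point $(X_{sc},y_{sc},S_{sc})$ has $\mathrm{rank}X_{sc}+\mathrm{rank}S_{sc}=n$. Let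 $\mathcal{P}:=\mathcal{A}^*(\mathcal{A}\mathcal{A}^* )^{-1}\mathcal{A}$ and $\mathcal{P}^\perp:=\mathrm{Id}-\mathcal{P}$. Fix $\sigma>0$ and let $\mathcal{Z}_\star:=\{X-\sigma S:X\in\mathcal{X}_\star,S\in\mathcal{S}_\star\}$. For $\bar Z\in\mathcal{Z}_\star$, $\delta'(\bar Z;H):=-\mathcal{P}\Pi_+'(\bar Z;H)-\mathcal{P}^\perp\Pi_-'(\bar Z;H)$. *)

theory Defs
  imports "HOL-Analysis.Analysis"
begin

text \<open>Real n x n matrices are "real^'n^'n"; the Euclidean inner product / norm on this
type is the trace inner product / Frobenius norm on symmetric matrices.\<close>

type_synonym 'n mat = "real^'n^'n"

definition sym_mat :: "'n::finite mat \<Rightarrow> bool" where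
  "sym_mat A \<longleftrightarrow> transpose A = A"

definition Sn :: "'n::finite mat set" where
  "Sn = {A. sym_mat A}"

definition psd :: "'n::finite mat \<Rightarrow> bool" where
  "psd A \<longleftrightarrow> sym_mat A \<and> (\<forall>x. 0 \<le> x \<bullet> (A *v x))"

definition nsd :: "'n::finite mat \<Rightarrow> bool" where
  "nsd A \<longleftrightarrow> psd (- A)"

definition proj_onto :: "'n::finite mat set \<Rightarrow> 'n mat \<Rightarrow> 'n mat" where
  "proj_onto K X = (THE Y. Y \<in> K \<and> (\<forall>W\<in>K. dist X Y \<le> dist X W))"

definition proj_psd :: "'n::finite mat \<Rightarrow> 'n mat" where
  "proj_psd = proj_onto {A. psd A}"

definition proj_nsd :: "'n::finite mat \<Rightarrow> 'n mat" where
  "proj_nsd = proj_onto {A. nsd A}"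

definition dir_deriv :: "('n::finite mat \<Rightarrow> 'n mat) \<Rightarrow> 'n mat \<Rightarrow> 'n mat \<Rightarrow> 'n mat" where
  "dir_deriv F Z H = Lim (at_right (0::real)) (\<lambda>t. (F (Z + t *\<^sub>R H) - F Z) /\<^sub>R t)"

text \<open>SDP operators. Constraint matrices indexed by a finite type 'm (so m = CARD('m)).\<close>
definition Aop :: "('m::finite \<Rightarrow> 'n::finite mat) \<Rightarrow> 'n mat \<Rightarrow> real^'m" where
  "Aop A X = (\<chi> i. A i \<bullet> X)"

definition Aadj :: "('m::finite \<Rightarrow> 'n::finite mat) \<Rightarrow> real^'m \<Rightarrow> 'n mat" where
  "Aadj A y = (\<Sum>i\<in>UNIV. (y $ i) *\<^sub>R A i)"

definition is_KKT ::
  "'n::finite mat \<Rightarrow> ('m::finite \<Rightarrow> 'n mat) \<Rightarrow> real^'m \<Rightarrow> 'n mat \<Rightarrow> real^'m \<Rightarrow> 'n mat \<Rightarrow> bool" where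
  "is_KKT C A b X y S \<longleftrightarrow> Aop A X = b \<and> Aadj A y + S = C \<and> psd X \<and> psd S \<and> X \<bullet> S = 0"

definition X_star :: "'n::finite mat \<Rightarrow> ('m::finite \<Rightarrow> 'n mat) \<Rightarrow> real^'m \<Rightarrow> 'n mat set" where
  "X_star C A b = {X. \<exists>y S. is_KKT C A b X y S}"

definition S_star :: "'n::finite mat \<Rightarrow> ('m::finite \<Rightarrow> 'n mat) \<Rightarrow> real^'m \<Rightarrow> 'n mat set" where
  "S_star C A b = {S. \<exists>X y. is_KKT C A b X y S}"

definition Z_star :: "real \<Rightarrow> 'n::finite mat \<Rightarrow> ('m::finite \<Rightarrow> 'n mat) \<Rightarrow> real^'m \<Rightarrow> 'n mat set" where
  "Z_star \<sigma> C A b = {X - \<sigma> *\<^sub>R S | X S. X \<in> X_star C A b \<and> S \<in> S_star C A b}"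

text \<open>P = A^*(AA^*)^{-1}A; the matrix of AA^* is the Gram matrix of the A_i.\<close>
definition Pop :: "('m::finite \<Rightarrow> 'n::finite mat) \<Rightarrow> 'n mat \<Rightarrow> 'n mat" where
  "Pop A X = Aadj A (matrix_inv (\<chi> i j. A i \<bullet> A j) *v Aop A X)"

definition Pperp :: "('m::finite \<Rightarrow> 'n::finite mat) \<Rightarrow> 'n mat \<Rightarrow> 'n mat" where
  "Pperp A X = X - Pop A X"

definition delta' :: "('m::finite \<Rightarrow> 'n::finite mat) \<Rightarrow> 'n mat \<Rightarrow> 'n mat \<Rightarrow> 'n mat" where
  "delta' A Z H = - Pop A (dir_deriv proj_psd Z H) - Pperp A (dir_deriv proj_nsd Z H)"

end

theory Submission
  imports Defs
begin

(* By Moreau's decomposition, a symmetric Y splits into the complementary PSD and NSD parts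
   proj_psd Y and proj_nsd Y = Y - proj_psd Y.  Since proj_psd is the projection onto a closed
   convex set, the difference quotients q_t(H) = (proj_psd (Z + tH) - proj_psd Z) / t are bounded
   and firmly nonexpansive in H.  Every cluster point p of q_t(H) as t tends to 0 satisfies the
   linearised complementarity relations psd_deriv_cond, and these determine p: on the common
   kernel W of the two Moreau parts x, v of Z the compression of p is the projection of the
   compression of H onto the PSD cone, and off W it is fixed by p v + x (H - p) = 0.  So the
   directional derivative D of proj_psd exists on symmetric matrices, is firmly nonexpansive, and
   the one of proj_nsd is H - D H.  Hence T = P + (I - 2P) o D for the orthogonal projection P,
   which has the same defect |a|^2 - a.h as D and is therefore firmly nonexpansive; as T 0 = 0,
   its iterates converge to a fixed point. *)

subsection \<open>Symmetric and positive semidefinite matrices\<close>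

lemma sym_matD: "sym_mat A \<Longrightarrow> A$i$j = A$j$i"
  unfolding sym_mat_def by (metis transpose_def vec_lambda_beta)

lemma sym_matI: "(\<And>i j. A$i$j = A$j$i) \<Longrightarrow> sym_mat A"
  unfolding sym_mat_def transpose_def by (simp add: vec_eq_iff)

lemma sym_mat_0: "sym_mat 0"
  by (rule sym_matI) simp

lemma sym_mat_add: "sym_mat A \<Longrightarrow> sym_mat B \<Longrightarrow> sym_mat (A + B)"
  by (rule sym_matI) (simp add: sym_matD)

lemma sym_mat_diff: "sym_mat A \<Longrightarrow> sym_mat B \<Longrightarrow> sym_mat (A - B)"
  by (rule sym_matI) (simp add: sym_matD)

lemma sym_mat_uminus: "sym_mat A \<Longrightarrow> sym_mat (- A)"
  by (rule sym_matI) (simp add: sym_matD)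

lemma sym_mat_scaleR: "sym_mat A \<Longrightarrow> sym_mat (c *\<^sub>R A)"
  by (rule sym_matI) (simp add: sym_matD)

lemma sym_mat_inner_mult: "sym_mat A \<Longrightarrow> x \<bullet> (A *v y) = (A *v x) \<bullet> y"
  by (metis dot_lmul_matrix sym_mat_def transpose_matrix_vector)

lemma sym_mat_vector_matrix_mult: "sym_mat A \<Longrightarrow> x v* A = A *v x"
  by (metis sym_mat_def transpose_matrix_vector)

lemma matrix_mult_row: "(A ** B)$i = (A$i) v* (B::real^'n::finite^'k::finite)"
  by (simp add: matrix_matrix_mult_def vector_matrix_mult_def vec_eq_iff)

lemma sym_mat_matrix_mult_row: "sym_mat B \<Longrightarrow> (A ** B)$i = B *v (A$i)"
  by (simp add: matrix_mult_row sym_mat_vector_matrix_mult)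

lemma psd_imp_sym_mat: "psd A \<Longrightarrow> sym_mat A"
  by (simp add: psd_def)

lemma psd_quadratic_nonneg: "psd A \<Longrightarrow> 0 \<le> x \<bullet> (A *v x)"
  by (simp add: psd_def)

lemma nsd_imp_sym_mat: "psd (- A) \<Longrightarrow> sym_mat A"
  using sym_mat_uminus[OF psd_imp_sym_mat] by fastforce

lemma matrix_vector_mult_uminus: "(- A) *v x = - ((A::real^'n::finite^'m) *v x)"
  by (simp add: matrix_vector_mult_def vec_eq_iff sum_negf)

lemma matrix_mult_uminus_left: "(- A) ** B = - ((A::real^'n::finite^'m) ** B)"
  by (simp add: matrix_matrix_mult_def vec_eq_iff sum_negf)

lemma nonneg_quadratic_imp_discriminant:
  fixes a b c :: real
  assumes c: "c \<ge> 0" and nonneg: "\<And>s. 0 \<le> a - 2 * s * b + s\<^sup>2 * c"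
  shows "b\<^sup>2 \<le> a * c"
proof (cases "c = 0")
  case True
  have "b = 0"
  proof (rule ccontr)
    assume "b \<noteq> 0"
    then show False
      using nonneg[of "(a + 1) / (2 * b)"] True by simp
  qed
  then show ?thesis
    using True by simp
next
  case False
  then have "c > 0"
    using c by simp
  then have "0 \<le> a - b\<^sup>2 / c"
    using nonneg[of "b / c"] by (simp add: power2_eq_square)
  then show ?thesis
    using \<open>c > 0\<close> by (simp add: field_simps)
qed

lemma sym_mat_quadratic_diff:
  assumes "sym_mat A"
  shows "(x - s *\<^sub>R y) \<bullet> (A *v (x - s *\<^sub>R y))
    = x \<bullet> (A *v x) - 2 * s * (x \<bullet> (A *v y)) + s\<^sup>2 * (y \<bullet> (A *v y))"
proof -
  have "y \<bullet> (A *v x) = x \<bullet> (A *v y)"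
    using sym_mat_inner_mult[OF assms] by (simp add: inner_commute)
  then show ?thesis
    by (simp add: matrix_vector_mult_diff_distrib matrix_vector_mult_scaleR inner_diff_left
        inner_diff_right power2_eq_square algebra_simps)
qed

lemma psd_cauchy_schwarz:
  assumes "psd A"
  shows "(x \<bullet> (A *v y))\<^sup>2 \<le> (x \<bullet> (A *v x)) * (y \<bullet> (A *v y))"
proof (rule nonneg_quadratic_imp_discriminant)
  show "0 \<le> y \<bullet> (A *v y)"
    using assms by (rule psd_quadratic_nonneg)
  show "0 \<le> x \<bullet> (A *v x) - 2 * s * (x \<bullet> (A *v y)) + s\<^sup>2 * (y \<bullet> (A *v y))" for s
    using psd_quadratic_nonneg[OF assms, of "x - s *\<^sub>R y"]
    by (simp add: sym_mat_quadratic_diff[OF psd_imp_sym_mat[OF assms]])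
qed

lemma psd_quadratic_eq_0:
  assumes "psd A" "x \<bullet> (A *v x) = 0"
  shows "A *v x = 0"
proof -
  have "((A *v x) \<bullet> (A *v x))\<^sup>2 \<le> 0"
    using psd_cauchy_schwarz[OF assms(1), of "A *v x" x] assms(2) by simp
  then show ?thesis
    by simp
qed

lemma matrix_vector_mult_axis: "(A *v axis j 1)$i = A$i$j"
  by (simp add: matrix_vector_mult_def axis_def if_distrib cong: if_cong)

lemma inner_axis_matrix_vector_mult: "axis j 1 \<bullet> (A *v axis j 1) = A$j$j"
  by (simp add: inner_axis' matrix_vector_mult_axis)

lemma psd_diag_eq_0:
  assumes "psd A" "A$i$i = 0"
  shows "A$k$i = 0"
proof -
  have "A *v axis i 1 = 0"
    using psd_quadratic_eq_0[OF assms(1)] assms(2) inner_axis_matrix_vector_mult by metis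
  then show ?thesis
    using matrix_vector_mult_axis by (metis zero_index)
qed

lemma psd_0: "psd 0"
  unfolding psd_def by (simp add: sym_mat_0)

lemma psd_add: "psd A \<Longrightarrow> psd B \<Longrightarrow> psd (A + B)"
  unfolding psd_def
  by (simp add: sym_mat_add matrix_vector_mult_add_rdistrib inner_add_right add_nonneg_nonneg)

lemma psd_scaleR: "0 \<le> c \<Longrightarrow> psd A \<Longrightarrow> psd (c *\<^sub>R A)"
  unfolding psd_def by (simp add: sym_mat_scaleR scaleR_matrix_vector_assoc[symmetric])

lemma sym_mat_transpose_eq: "sym_mat A \<Longrightarrow> transpose A = A"
  by (simp add: sym_mat_def)

lemma inner_eq_trace: "(A::real^'n::finite^'m::finite) \<bullet> B = trace (transpose A ** B)"
proof -
  have "A \<bullet> B = (\<Sum>i\<in>UNIV. \<Sum>j\<in>UNIV. A$i$j * B$i$j)"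
    by (simp add: inner_vec_def)
  also have "\<dots> = (\<Sum>j\<in>UNIV. \<Sum>i\<in>UNIV. A$i$j * B$i$j)"
    by (rule sum.swap)
  also have "\<dots> = trace (transpose A ** B)"
    by (simp add: trace_def matrix_matrix_mult_def transpose_def)
  finally show ?thesis .
qed

lemma trace_transpose: "trace (transpose (A::real^'n::finite^'n)) = trace A"
  by (simp add: trace_def transpose_def)

lemma inner_transpose: "transpose A \<bullet> transpose B = (A::real^'n::finite^'n) \<bullet> B"
proof -
  have "transpose A \<bullet> transpose B = trace (A ** transpose B)"
    by (simp add: inner_eq_trace)
  also have "\<dots> = trace (transpose (A ** transpose B))"
    by (rule trace_transpose[symmetric])
  also have "\<dots> = trace (B ** transpose A)"
    by (simp add: matrix_transpose_mul)
  also have "\<dots> = trace (transpose A ** B)"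
    by (rule trace_mul_sym)
  finally show ?thesis
    by (simp add: inner_eq_trace)
qed

lemma inner_matrix_mult_left: "((A::real^'n::finite^'n) ** B) \<bullet> C = B \<bullet> (transpose A ** C)"
  by (simp add: inner_eq_trace matrix_transpose_mul matrix_mul_assoc)

lemma inner_matrix_mult_right: "((A::real^'n::finite^'n) ** B) \<bullet> C = A \<bullet> (C ** transpose B)"
proof -
  have "(A ** B) \<bullet> C = trace (transpose B ** (transpose A ** C))"
    by (simp add: inner_eq_trace matrix_transpose_mul matrix_mul_assoc)
  also have "\<dots> = trace ((transpose A ** C) ** transpose B)"
    by (rule trace_mul_sym)
  finally show ?thesis
    by (simp add: inner_eq_trace matrix_mul_assoc)
qed

lemma matrix_mult_diff_left: "(A::real^'n::finite^'n) ** (B - C) = A ** B - A ** C"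
  by (simp add: matrix_matrix_mult_def vec_eq_iff sum_subtractf right_diff_distrib)

lemma matrix_mult_diff_right: "((A::real^'n::finite^'n) - B) ** C = A ** C - B ** C"
  by (simp add: matrix_matrix_mult_def vec_eq_iff sum_subtractf left_diff_distrib)

lemma matrix_mult_add_right: "((A::real^'n::finite^'n) + B) ** C = A ** C + B ** C"
  by (simp add: matrix_matrix_mult_def vec_eq_iff sum.distrib distrib_right)

lemma matrix_eq_0I: "(\<And>u. A *v u = 0) \<Longrightarrow> (A::real^'n::finite^'n) = 0"
  by (metis matrix_eq matrix_vector_mult_0)

lemma matrix_vector_mult_sum:
  "finite B \<Longrightarrow> (sum f B) *v z = (\<Sum>b\<in>B. f b *v (z::real^'n::finite))"
  by (induction B rule: finite_induct) (simp_all add: matrix_vector_mult_add_rdistrib)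

lemma tendsto_matrix_mult:
  "(f \<longlongrightarrow> (A::real^'n::finite^'n)) F \<Longrightarrow> (g \<longlongrightarrow> B) F \<Longrightarrow> ((\<lambda>x. f x ** g x) \<longlongrightarrow> A ** B) F"
  unfolding matrix_matrix_mult_def by (intro tendsto_intros)

lemma tendsto_matrix_vector_mult:
  "(f \<longlongrightarrow> (A::real^'n::finite^'n)) F \<Longrightarrow> ((\<lambda>x. f x *v u) \<longlongrightarrow> A *v u) F"
  unfolding matrix_vector_mult_def by (intro tendsto_intros)

lemma closed_Sn: "closed (Sn :: 'n::finite mat set)"
proof -
  have "(Sn :: 'n mat set) = (\<Inter>i. \<Inter>j. {A. A$i$j = A$j$i})"
    by (auto simp: Sn_def sym_mat_def vec_eq_iff transpose_def)
  also have "closed \<dots>"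
    by (intro closed_INT ballI closed_Collect_eq continuous_intros)
  finally show ?thesis .
qed

subsection \<open>Rank-one decomposition and the self-duality of the PSD cone\<close>

definition outer :: "real^'m::finite \<Rightarrow> real^'n::finite \<Rightarrow> real^'n^'m" where
  "outer u w = (\<chi> i j. u$i * w$j)"

lemma outer_matrix_vector_mult: "outer u w *v x = (w \<bullet> x) *\<^sub>R u"
  by (simp add: outer_def matrix_vector_mult_def vec_eq_iff inner_vec_def sum_distrib_left mult_ac)

lemma inner_outer_self: "outer u u \<bullet> B = u \<bullet> (B *v u)"
  by (simp add: outer_def inner_vec_def matrix_vector_mult_def sum_distrib_left mult_ac)

lemma matrix_mult_outer: "B ** outer u w = outer (B *v u) w"
  by (simp add: matrix_matrix_mult_def outer_def matrix_vector_mult_def sum_distrib_right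
      sum_distrib_left vec_eq_iff mult_ac)

lemma outer_scaleR_self: "outer (k *\<^sub>R u) (k *\<^sub>R u) = (k * k) *\<^sub>R outer u u"
  by (simp add: outer_def vec_eq_iff mult_ac)

lemma outer_0_left [simp]: "outer 0 w = 0"
  by (simp add: outer_def vec_eq_iff)

lemma sym_mat_outer_self: "sym_mat (outer u u)"
  by (rule sym_matI) (simp add: outer_def mult.commute)

lemma psd_outer_self: "psd (outer u u)"
  unfolding psd_def
proof (intro conjI allI)
  fix x
  have "x \<bullet> (outer u u *v x) = (u \<bullet> x)\<^sup>2"
    by (simp add: outer_matrix_vector_mult power2_eq_square inner_commute)
  then show "0 \<le> x \<bullet> (outer u u *v x)"
    by simp
qed (rule sym_mat_outer_self)

text \<open>One step of the Cholesky factorisation: subtracting the rank-one matrix built from a column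
  with positive diagonal entry keeps the matrix PSD (by Cauchy--Schwarz) and kills that diagonal
  entry.\<close>
lemma psd_deflate:
  assumes psd: "psd A" and pos: "A$j$j > 0"
  defines "A' \<equiv> A - (1 / A$j$j) *\<^sub>R outer (A *v axis j 1) (A *v axis j 1)"
  shows "psd A'" and "A'$j$j = 0" and "\<And>i. A$i$i = 0 \<Longrightarrow> A'$i$i = 0"
proof -
  define d where "d = A$j$j"
  define c where "c = A *v axis j 1"
  have symA: "sym_mat A"
    using psd psd_imp_sym_mat by blast
  have diag: "A'$i$i = A$i$i - (1/d) * (A$i$j)\<^sup>2" for i
    by (simp add: A'_def d_def outer_def matrix_vector_mult_axis power2_eq_square)
  show "A'$j$j = 0"
    using diag[of j] pos by (simp add: d_def power2_eq_square)
  show "A'$i$i = 0" if "A$i$i = 0" for i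
    using diag psd_diag_eq_0[OF psd that, of j] sym_matD[OF symA, of i j] that by simp
  show "psd A'"
    unfolding psd_def
  proof
    show "sym_mat A'"
      by (rule sym_matI) (simp add: A'_def outer_def sym_matD[OF symA])
    show "\<forall>w. 0 \<le> w \<bullet> (A' *v w)"
    proof
      fix w
      have "c \<bullet> w = w \<bullet> (A *v axis j 1)"
        using sym_mat_inner_mult[OF symA] c_def by (simp add: inner_commute)
      then have "(c \<bullet> w)\<^sup>2 \<le> (w \<bullet> (A *v w)) * d"
        using psd_cauchy_schwarz[OF psd, of w "axis j 1"] inner_axis_matrix_vector_mult[of j A] d_def
        by simp
      then have "(1/d) * (c \<bullet> w)\<^sup>2 \<le> w \<bullet> (A *v w)"
        using pos by (simp add: d_def field_simps)
      moreover have "w \<bullet> (A' *v w) = w \<bullet> (A *v w) - (1/d) * (c \<bullet> w)\<^sup>2"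
        by (simp add: A'_def c_def d_def matrix_vector_mult_diff_rdistrib inner_diff_right
            scaleR_matrix_vector_assoc[symmetric] outer_matrix_vector_mult power2_eq_square
            inner_commute)
      ultimately show "0 \<le> w \<bullet> (A' *v w)"
        by linarith
    qed
  qed
qed

lemma psd_eq_sum_outer:
  fixes A :: "real^'n::finite^'n"
  shows "psd A \<Longrightarrow> \<exists>us. A = (\<Sum>u\<leftarrow>us. outer u u)"
proof (induction "card {i. A$i$i \<noteq> 0}" arbitrary: A rule: less_induct)
  case less
  show ?case
  proof (cases "\<exists>j. A$j$j \<noteq> 0")
    case False
    then have "A = 0"
      using psd_diag_eq_0[OF less.prems] by (simp add: vec_eq_iff)
    then show ?thesis
      by (intro exI[of _ "[]"]) simp
  next
    case True
    then obtain j where "A$j$j \<noteq> 0"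
      by auto
    moreover have "0 \<le> A$j$j"
      using psd_quadratic_nonneg[OF less.prems, of "axis j 1"] inner_axis_matrix_vector_mult by metis
    ultimately have pos: "A$j$j > 0"
      by simp
    define k where "k = 1 / sqrt (A$j$j)"
    define c where "c = k *\<^sub>R (A *v axis j 1)"
    define A' where "A' = A - outer c c"
    have A': "A' = A - (1 / A$j$j) *\<^sub>R outer (A *v axis j 1) (A *v axis j 1)"
      using pos by (simp add: A'_def c_def k_def outer_scaleR_self)
    have "{i. A'$i$i \<noteq> 0} \<subset> {i. A$i$i \<noteq> 0}"
      using psd_deflate(2,3)[OF less.prems pos, folded A'] \<open>A$j$j \<noteq> 0\<close> by blast
    then have "card {i. A'$i$i \<noteq> 0} < card {i. A$i$i \<noteq> 0}"
      by (simp add: psubset_card_mono)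
    from less.hyps[OF this psd_deflate(1)[OF less.prems pos, folded A']]
    obtain us where "A' = (\<Sum>u\<leftarrow>us. outer u u)"
      by blast
    moreover have "A = outer c c + A'"
      by (simp add: A'_def)
    ultimately show ?thesis
      by (intro exI[of _ "c # us"]) simp
  qed
qed

lemma inner_sum_outer: "(\<Sum>u\<leftarrow>us. outer u u) \<bullet> B = (\<Sum>u\<leftarrow>us. u \<bullet> (B *v u))"
  by (induction us) (simp_all add: inner_add_left inner_outer_self)

lemma matrix_mult_sum_outer: "B ** (\<Sum>u\<leftarrow>us. outer u u) = (\<Sum>u\<leftarrow>us. outer (B *v u) u)"
  by (induction us) (simp_all add: matrix_add_ldistrib matrix_mult_outer)

lemma psd_inner_nonneg:
  assumes "psd A" "psd B"
  shows "0 \<le> A \<bullet> B"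
proof -
  obtain us where "A = (\<Sum>u\<leftarrow>us. outer u u)"
    using psd_eq_sum_outer[OF assms(1)] by blast
  then show ?thesis
    using psd_quadratic_nonneg[OF assms(2)] by (auto simp: inner_sum_outer intro!: sum_list_nonneg)
qed

lemma psd_inner_eq_0:
  assumes "psd A" "psd B" "A \<bullet> B = 0"
  shows "B ** A = 0"
proof -
  obtain us where A: "A = (\<Sum>u\<leftarrow>us. outer u u)"
    using psd_eq_sum_outer[OF assms(1)] by blast
  then have "(\<Sum>u\<leftarrow>us. u \<bullet> (B *v u)) = 0"
    using assms(3) by (simp add: inner_sum_outer)
  then have "\<forall>u\<in>set us. u \<bullet> (B *v u) = 0"
    using psd_quadratic_nonneg[OF assms(2)]
      sum_list_nonneg_eq_0_iff[of "map (\<lambda>u. u \<bullet> (B *v u)) us"] by auto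
  then have "\<forall>u\<in>set us. B *v u = 0"
    using psd_quadratic_eq_0[OF assms(2)] by blast
  then have "(\<Sum>u\<leftarrow>us. outer (B *v u) u) = 0"
    by (induction us) simp_all
  then show ?thesis
    by (simp add: A matrix_mult_sum_outer)
qed

subsection \<open>Firmly nonexpansive maps\<close>

definition firmly_nonexpansive_on :: "'a::real_inner set \<Rightarrow> ('a \<Rightarrow> 'a) \<Rightarrow> bool" where
  "firmly_nonexpansive_on S T \<longleftrightarrow> (\<forall>x\<in>S. \<forall>y\<in>S.
     (norm (T x - T y))\<^sup>2 + (norm ((x - T x) - (y - T y)))\<^sup>2 \<le> (norm (x - y))\<^sup>2)"

lemma firmly_nonexpansive_on_iff_inner:
  "firmly_nonexpansive_on S T \<longleftrightarrow> (\<forall>x\<in>S. \<forall>y\<in>S. (norm (T x - T y))\<^sup>2 \<le> (T x - T y) \<bullet> (x - y))"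
proof -
  have general: "(norm a)\<^sup>2 + (norm (h - a))\<^sup>2 \<le> (norm h)\<^sup>2 \<longleftrightarrow> (norm a)\<^sup>2 \<le> a \<bullet> h"
    for a h :: 'a
    by (simp add: power2_norm_eq_inner inner_diff_left inner_diff_right inner_commute)
  have "(x - T x) - (y - T y) = (x - y) - (T x - T y)" for x y
    by simp
  then show ?thesis
    unfolding firmly_nonexpansive_on_def using general by presburger
qed

lemma firmly_nonexpansive_on_imp_nonexpansive:
  assumes "firmly_nonexpansive_on S T" "x \<in> S" "y \<in> S"
  shows "norm (T x - T y) \<le> norm (x - y)"
proof -
  have "(norm (T x - T y))\<^sup>2 \<le> (norm (x - y))\<^sup>2"
    using assms unfolding firmly_nonexpansive_on_def by (smt (verit) zero_le_power2)
  then show ?thesis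
    by (rule power2_le_imp_le) simp
qed

lemma firmly_nonexpansive_on_imp_continuous_on:
  "firmly_nonexpansive_on S T \<Longrightarrow> continuous_on S T"
  by (rule lipschitz_on_continuous_on[of 1])
    (auto intro!: lipschitz_onI simp: dist_norm firmly_nonexpansive_on_imp_nonexpansive)

lemma firmly_nonexpansive_on_cong:
  "(\<And>x. x \<in> S \<Longrightarrow> T x = T' x) \<Longrightarrow> firmly_nonexpansive_on S T \<longleftrightarrow> firmly_nonexpansive_on S T'"
  by (simp add: firmly_nonexpansive_on_def)

lemma firmly_nonexpansive_closest_point:
  fixes S :: "'a::{real_inner,heine_borel} set"
  assumes "convex S" "closed S" "S \<noteq> {}"
  shows "firmly_nonexpansive_on UNIV (closest_point S)"
  unfolding firmly_nonexpansive_on_iff_inner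
proof (intro ballI)
  fix a b :: 'a
  let ?pa = "closest_point S a" and ?pb = "closest_point S b"
  have "(a - ?pa) \<bullet> (?pb - ?pa) \<le> 0" "(b - ?pb) \<bullet> (?pa - ?pb) \<le> 0"
    using closest_point_dot closest_point_in_set assms by blast+
  moreover have "(norm (?pa - ?pb))\<^sup>2 = (?pa - ?pb) \<bullet> (a - b)
      + (a - ?pa) \<bullet> (?pb - ?pa) + (b - ?pb) \<bullet> (?pa - ?pb)"
    by (simp add: power2_norm_eq_inner inner_diff_left inner_diff_right inner_commute)
  ultimately show "(norm (?pa - ?pb))\<^sup>2 \<le> (?pa - ?pb) \<bullet> (a - b)"
    by linarith
qed

lemma firmly_nonexpansive_on_diff_quotient:
  assumes "firmly_nonexpansive_on UNIV F" "t > 0"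
  shows "firmly_nonexpansive_on UNIV (\<lambda>h. (F (z + t *\<^sub>R h) - F z) /\<^sub>R t)"
  unfolding firmly_nonexpansive_on_iff_inner
proof (intro ballI)
  fix h g
  define w where "w = F (z + t *\<^sub>R h) - F (z + t *\<^sub>R g)"
  have "(F (z + t *\<^sub>R h) - F z) /\<^sub>R t - (F (z + t *\<^sub>R g) - F z) /\<^sub>R t = w /\<^sub>R t"
    by (simp add: w_def scaleR_diff_right)
  moreover have "(norm w)\<^sup>2 \<le> t * (w \<bullet> (h - g))"
    using assms(1) unfolding firmly_nonexpansive_on_iff_inner
    by (metis UNIV_I add_diff_cancel_left inner_scaleR_right scaleR_diff_right w_def)
  ultimately show "(norm ((F (z + t *\<^sub>R h) - F z) /\<^sub>R t - (F (z + t *\<^sub>R g) - F z) /\<^sub>R t))\<^sup>2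
      \<le> ((F (z + t *\<^sub>R h) - F z) /\<^sub>R t - (F (z + t *\<^sub>R g) - F z) /\<^sub>R t) \<bullet> (h - g)"
    using assms(2) by (simp add: power_divide power2_eq_square field_simps)
qed

lemma firmly_nonexpansive_on_limit:
  fixes f :: "'b \<Rightarrow> 'a::real_inner \<Rightarrow> 'a"
  assumes "F \<noteq> bot" "\<forall>\<^sub>F i in F. firmly_nonexpansive_on S (f i)"
    and "\<And>x. x \<in> S \<Longrightarrow> ((\<lambda>i. f i x) \<longlongrightarrow> g x) F"
  shows "firmly_nonexpansive_on S g"
  unfolding firmly_nonexpansive_on_def
proof (intro ballI)
  fix x y assume "x \<in> S" "y \<in> S"
  show "(norm (g x - g y))\<^sup>2 + (norm ((x - g x) - (y - g y)))\<^sup>2 \<le> (norm (x - y))\<^sup>2"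
  proof (rule tendsto_le[OF assms(1) tendsto_const])
    show "((\<lambda>i. (norm (f i x - f i y))\<^sup>2 + (norm ((x - f i x) - (y - f i y)))\<^sup>2) \<longlongrightarrow>
        (norm (g x - g y))\<^sup>2 + (norm ((x - g x) - (y - g y)))\<^sup>2) F"
      by (intro tendsto_intros assms(3) \<open>x \<in> S\<close> \<open>y \<in> S\<close>)
    show "\<forall>\<^sub>F i in F. (norm (f i x - f i y))\<^sup>2 + (norm ((x - f i x) - (y - f i y)))\<^sup>2
        \<le> (norm (x - y))\<^sup>2"
      using assms(2) by eventually_elim (use \<open>x \<in> S\<close> \<open>y \<in> S\<close> in \<open>simp add: firmly_nonexpansive_on_def\<close>)
  qed
qed

text \<open>With an orthogonal projection \<open>P\<close>, the map \<open>P + (I - 2P) \<circ> D\<close> has the same defect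
  \<open>\<parallel>a\<parallel>\<^sup>2 - a \<bullet> h\<close> as \<open>D\<close>, hence inherits firm nonexpansiveness from it.\<close>
lemma firmly_nonexpansive_on_proj_reflect:
  fixes P :: "'a::real_inner \<Rightarrow> 'a"
  assumes P: "linear P" and orth: "\<And>u w. P u \<bullet> (w - P w) = 0"
    and D: "firmly_nonexpansive_on S D"
  shows "firmly_nonexpansive_on S (\<lambda>h. P h + D h - 2 *\<^sub>R P (D h))"
proof -
  have defect: "(norm (h1 - d1 + d2))\<^sup>2 - (h1 - d1 + d2) \<bullet> (h1 + h2)
      = (norm (d1 + d2))\<^sup>2 - (d1 + d2) \<bullet> (h1 + h2)"
    if "h1 \<bullet> h2 = 0" "h1 \<bullet> d2 = 0" "d1 \<bullet> h2 = 0" "d1 \<bullet> d2 = 0" for h1 h2 d1 d2 :: 'a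
  proof -
    have "h2 \<bullet> h1 = 0" "d2 \<bullet> h1 = 0" "h2 \<bullet> d1 = 0" "d2 \<bullet> d1 = 0"
      using that by (simp_all add: inner_commute)
    then show ?thesis
      using that by (simp add: power2_norm_eq_inner inner_add_left inner_add_right inner_diff_left
          inner_diff_right inner_commute)
  qed
  have defect_P: "(norm (P h + d - 2 *\<^sub>R P d))\<^sup>2 - (P h + d - 2 *\<^sub>R P d) \<bullet> h
      = (norm d)\<^sup>2 - d \<bullet> h" for h d
  proof -
    have split: "P h + d - 2 *\<^sub>R P d = P h - P d + (d - P d)"
      by (simp add: scaleR_2)
    show ?thesis
      unfolding split using defect[of "P h" "h - P h" "d - P d" "P d", OF orth orth orth orth] by simp
  qed
  show ?thesis
    unfolding firmly_nonexpansive_on_iff_inner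
  proof (intro ballI)
    fix x y
    assume "x \<in> S" "y \<in> S"
    then have "(norm (D x - D y))\<^sup>2 \<le> (D x - D y) \<bullet> (x - y)"
      using D unfolding firmly_nonexpansive_on_iff_inner by blast
    moreover have diff: "P x + D x - 2 *\<^sub>R P (D x) - (P y + D y - 2 *\<^sub>R P (D y))
        = P (x - y) + (D x - D y) - 2 *\<^sub>R P (D x - D y)"
      using P by (simp add: linear_diff algebra_simps)
    ultimately show "(norm (P x + D x - 2 *\<^sub>R P (D x) - (P y + D y - 2 *\<^sub>R P (D y))))\<^sup>2
        \<le> (P x + D x - 2 *\<^sub>R P (D x) - (P y + D y - 2 *\<^sub>R P (D y))) \<bullet> (x - y)"
      unfolding diff using defect_P[of "x - y" "D x - D y"] by linarith
  qed
qed

subsection \<open>Iterating a firmly nonexpansive map\<close>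

lemma decseq_dist_subseq_tendsto:
  fixes h :: "nat \<Rightarrow> 'a::metric_space"
  assumes "decseq (\<lambda>k. dist (h k) l)" "strict_mono r" "(h \<circ> r) \<longlonglongrightarrow> l"
  shows "h \<longlonglongrightarrow> l"
proof -
  obtain c where c: "(\<lambda>k. dist (h k) l) \<longlonglongrightarrow> c"
    using decseq_convergent[OF assms(1), of 0] by auto
  have "(\<lambda>k. dist (h (r k)) l) \<longlonglongrightarrow> c"
    using LIMSEQ_subseq_LIMSEQ[OF c assms(2)] by (simp add: o_def)
  moreover have "(\<lambda>k. dist (h (r k)) l) \<longlonglongrightarrow> 0"
    using assms(3) by (simp add: o_def flip: tendsto_dist_iff)
  ultimately have "c = 0"
    using LIMSEQ_unique by blast
  then show ?thesis
    using c tendsto_dist_iff by blast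
qed

context
  fixes T :: "'a::real_inner \<Rightarrow> 'a" and S
  assumes maps: "T ` S \<subseteq> S" and firm: "firmly_nonexpansive_on S T"
begin

lemma firmly_nonexpansive_on_iterate_in: "x \<in> S \<Longrightarrow> (T ^^ k) x \<in> S"
  by (induction k) (use maps in auto)

lemma firmly_nonexpansive_on_iterate_fejer:
  assumes "x \<in> S" "y \<in> S" "T y = y"
  shows "(norm ((T ^^ Suc k) x - y))\<^sup>2 + (norm ((T ^^ k) x - (T ^^ Suc k) x))\<^sup>2
    \<le> (norm ((T ^^ k) x - y))\<^sup>2"
proof -
  have "(norm (T ((T ^^ k) x) - T y))\<^sup>2 + (norm (((T ^^ k) x - T ((T ^^ k) x)) - (y - T y)))\<^sup>2
      \<le> (norm ((T ^^ k) x - y))\<^sup>2"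
    using firm firmly_nonexpansive_on_iterate_in[OF assms(1)] assms(2)
    unfolding firmly_nonexpansive_on_def by blast
  then show ?thesis
    using assms(3) by simp
qed

lemma firmly_nonexpansive_on_iterate_dist_decseq:
  assumes "x \<in> S" "y \<in> S" "T y = y"
  shows "decseq (\<lambda>k. dist ((T ^^ k) x) y)"
proof (rule decseq_SucI)
  fix k
  have "(norm ((T ^^ Suc k) x - y))\<^sup>2 \<le> (norm ((T ^^ k) x - y))\<^sup>2"
    using firmly_nonexpansive_on_iterate_fejer[OF assms, of k]
      zero_le_power2[of "norm ((T ^^ k) x - (T ^^ Suc k) x)"] by linarith
  then show "dist ((T ^^ Suc k) x) y \<le> dist ((T ^^ k) x) y"
    unfolding dist_norm by (rule power2_le_imp_le) simp
qed

lemma firmly_nonexpansive_on_iterate_steps_tendsto_0: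
  assumes "x \<in> S" "y \<in> S" "T y = y"
  shows "(\<lambda>k. (T ^^ k) x - (T ^^ Suc k) x) \<longlonglongrightarrow> 0"
proof -
  define a where "a k = (norm ((T ^^ k) x - y))\<^sup>2" for k
  have step: "(norm ((T ^^ k) x - (T ^^ Suc k) x))\<^sup>2 \<le> a k - a (Suc k)" for k
    using firmly_nonexpansive_on_iterate_fejer[OF assms, of k] by (simp add: a_def)
  then have "decseq a"
    by (intro decseq_SucI) (smt (verit) zero_le_power2)
  moreover have "\<forall>k. 0 \<le> a k"
    by (simp add: a_def)
  ultimately obtain L where L: "a \<longlonglongrightarrow> L"
    using decseq_convergent by metis
  have "(\<lambda>k. a k - a (Suc k)) \<longlonglongrightarrow> 0"
    using tendsto_diff[OF L LIMSEQ_Suc[OF L]] by simp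
  then have "(\<lambda>k. (norm ((T ^^ k) x - (T ^^ Suc k) x))\<^sup>2) \<longlonglongrightarrow> 0"
  proof (rule real_tendsto_sandwich[of "\<lambda>_. 0", rotated 3])
    show "\<forall>\<^sub>F k in sequentially. (norm ((T ^^ k) x - (T ^^ Suc k) x))\<^sup>2 \<le> a k - a (Suc k)"
      using step by simp
  qed simp_all
  then have "(\<lambda>k. sqrt ((norm ((T ^^ k) x - (T ^^ Suc k) x))\<^sup>2)) \<longlonglongrightarrow> sqrt 0"
    by (rule tendsto_real_sqrt)
  then show ?thesis
    by (simp add: tendsto_norm_zero_iff)
qed

end

text \<open>Krasnoselskii's theorem for firmly nonexpansive maps: a cluster point of the
  iterates is fixed because the steps tend to zero, and then Fejer monotonicity forces
  convergence of the whole sequence.\<close>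
lemma firmly_nonexpansive_on_iterates_converge:
  fixes T :: "'a::euclidean_space \<Rightarrow> 'a"
  assumes S: "closed S" and maps: "T ` S \<subseteq> S" and firm: "firmly_nonexpansive_on S T"
    and z: "z \<in> S" "T z = z" and x: "x \<in> S"
  shows "\<exists>y. ((\<lambda>k. (T ^^ k) x) \<longlonglongrightarrow> y) \<and> T y = y"
proof -
  define h where "h k = (T ^^ k) x" for k
  have hS: "h k \<in> S" for k
    unfolding h_def by (rule firmly_nonexpansive_on_iterate_in[OF maps firm x])
  have hSuc: "h (Suc k) = T (h k)" for k
    by (simp add: h_def)
  have dec: "decseq (\<lambda>k. dist (h k) y)" if "y \<in> S" "T y = y" for y
    unfolding h_def by (rule firmly_nonexpansive_on_iterate_dist_decseq[OF maps firm x that])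
  have "range h \<subseteq> cball z (dist (h 0) z)"
    using decseqD[OF dec[OF z]] by (auto simp: dist_commute)
  then obtain y r where r: "strict_mono r" and hr: "(h \<circ> r) \<longlonglongrightarrow> y"
    using bounded_imp_convergent_subsequence bounded_cball bounded_subset by metis
  have "y \<in> S"
    using closed_sequentially[OF S _ hr] hS by simp
  have "(\<lambda>k. h k - h (Suc k)) \<longlonglongrightarrow> 0"
    unfolding h_def by (rule firmly_nonexpansive_on_iterate_steps_tendsto_0[OF maps firm x z])
  then have "(\<lambda>k. h (r k) - (h (r k) - h (Suc (r k)))) \<longlonglongrightarrow> y - 0"
    using hr LIMSEQ_subseq_LIMSEQ[OF _ r] by (intro tendsto_diff) (auto simp: o_def)
  then have "(\<lambda>k. T (h (r k))) \<longlonglongrightarrow> y"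
    by (simp add: hSuc)
  moreover have "(\<lambda>k. T (h (r k))) \<longlonglongrightarrow> T y"
    using continuous_on_tendsto_compose[OF firmly_nonexpansive_on_imp_continuous_on[OF firm] hr \<open>y \<in> S\<close>]
      hS by (simp add: o_def)
  ultimately have "T y = y"
    using LIMSEQ_unique by metis
  moreover have "h \<longlonglongrightarrow> y"
    by (rule decseq_dist_subseq_tendsto[OF dec[OF \<open>y \<in> S\<close> \<open>T y = y\<close>] r hr])
  ultimately show ?thesis
    unfolding h_def by blast
qed

subsection \<open>The PSD and NSD cones and the projections onto them\<close>

lemma convex_psd: "convex {A::real^'n::finite^'n. psd A}"
  unfolding convex_def by (auto intro!: psd_add psd_scaleR)

lemma closed_psd: "closed {A::real^'n::finite^'n. psd A}"
proof -
  have "{A::real^'n^'n. psd A}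
      = (\<Inter>i. \<Inter>j. {A. A$i$j = A$j$i}) \<inter> (\<Inter>x. {A. 0 \<le> x \<bullet> (A *v x)})"
    by (auto simp: psd_def sym_mat_def vec_eq_iff transpose_def)
  also have "closed \<dots>"
    unfolding matrix_vector_mult_def inner_vec_def
    by (intro closed_Int closed_INT ballI closed_Collect_eq closed_Collect_le continuous_intros)
  finally show ?thesis .
qed

lemma psd_cone_nonempty: "{A::real^'n::finite^'n. psd A} \<noteq> {}"
  using psd_0 by blast

lemma nsd_cone_nonempty: "{A::real^'n::finite^'n. nsd A} \<noteq> {}"
proof -
  have "nsd (0::real^'n^'n)"
    by (simp add: nsd_def psd_0)
  then show ?thesis
    by blast
qed

lemma nsd_eq_uminus_psd: "{A::real^'n::finite^'n. nsd A} = uminus ` {A. psd A}"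
proof (auto simp: nsd_def image_iff)
  fix A :: "real^'n^'n"
  assume "psd (- A)"
  then show "\<exists>B. psd B \<and> A = - B"
    by (intro exI[of _ "- A"]) simp
qed

lemma convex_nsd: "convex {A::real^'n::finite^'n. nsd A}"
  unfolding nsd_eq_uminus_psd by (rule convex_negations[OF convex_psd])

lemma closed_nsd: "closed {A::real^'n::finite^'n. nsd A}"
  unfolding nsd_eq_uminus_psd by (rule closed_negations[OF closed_psd])

lemma closest_point_eqI:
  fixes a :: "'a::{real_inner,heine_borel}"
  assumes "convex S" "closed S" "x \<in> S" "\<And>y. y \<in> S \<Longrightarrow> (a - x) \<bullet> (y - x) \<le> 0"
  shows "closest_point S a = x"
proof -
  have "dist a x \<le> dist a y" if "y \<in> S" for y
  proof -
    have "(norm (a - y))\<^sup>2 = (norm (a - x))\<^sup>2 - 2 * ((a - x) \<bullet> (y - x)) + (norm (y - x))\<^sup>2"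
      by (simp add: power2_norm_eq_inner inner_diff_left inner_diff_right inner_commute)
    then have "(norm (a - x))\<^sup>2 \<le> (norm (a - y))\<^sup>2"
      using assms(4)[OF that] zero_le_power2[of "norm (y - x)"] by linarith
    then show ?thesis
      unfolding dist_norm by (rule power2_le_imp_le) simp
  qed
  then have "x = closest_point S a"
    by (intro closest_point_unique[OF assms(1-3)]) blast
  then show ?thesis
    by (rule sym)
qed

lemma proj_onto_eq_closest_point:
  assumes "closed K" "convex K" "K \<noteq> {}"
  shows "proj_onto K Y = closest_point K Y"
  unfolding proj_onto_def
proof (rule the1_equality)
  show "\<exists>!X. X \<in> K \<and> (\<forall>W\<in>K. dist Y X \<le> dist Y W)"
    using closest_point_exists[OF assms(1,3)] any_closest_point_unique[OF assms(2,1)] by blast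
  show "closest_point K Y \<in> K \<and> (\<forall>W\<in>K. dist Y (closest_point K Y) \<le> dist Y W)"
    using closest_point_exists[OF assms(1,3)] by blast
qed

lemma proj_psd_eq_closest_point: "proj_psd = closest_point {A::real^'n::finite^'n. psd A}"
  unfolding proj_psd_def
  by (rule ext, rule proj_onto_eq_closest_point[OF closed_psd convex_psd psd_cone_nonempty])

lemma proj_nsd_eq_closest_point: "proj_nsd = closest_point {A::real^'n::finite^'n. nsd A}"
  unfolding proj_nsd_def
  by (rule ext, rule proj_onto_eq_closest_point[OF closed_nsd convex_nsd nsd_cone_nonempty])

lemma psd_proj_psd: "psd (proj_psd Y)"
  using closest_point_in_set[OF closed_psd psd_cone_nonempty, of Y]
  by (simp add: proj_psd_eq_closest_point)

lemma firmly_nonexpansive_proj_psd: "firmly_nonexpansive_on UNIV proj_psd"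
  unfolding proj_psd_eq_closest_point
  by (rule firmly_nonexpansive_closest_point[OF convex_psd closed_psd psd_cone_nonempty])

lemma moreau_decomposition:
  fixes Y :: "real^'n::finite^'n"
  assumes "sym_mat Y"
  defines "x \<equiv> proj_psd Y" and "v \<equiv> Y - proj_psd Y"
  shows "psd x" "psd (- v)" "x \<bullet> v = 0" "v ** x = 0" "x ** v = 0"
proof -
  show px: "psd x"
    using psd_proj_psd x_def by simp
  have vi: "v \<bullet> (y - x) \<le> 0" if "psd y" for y
    using closest_point_dot[OF convex_psd closed_psd, of y Y] that
    by (simp add: x_def v_def proj_psd_eq_closest_point)
  show pv: "psd (- v)"
    unfolding psd_def
  proof (intro conjI allI)
    show "sym_mat (- v)"
      using assms px by (simp add: v_def x_def sym_mat_uminus sym_mat_diff psd_imp_sym_mat)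
    fix u
    have "v \<bullet> ((x + outer u u) - x) \<le> 0"
      using vi psd_add[OF px psd_outer_self] by blast
    then have "outer u u \<bullet> v \<le> 0"
      by (simp add: inner_commute)
    then show "0 \<le> u \<bullet> (- v *v u)"
      by (simp add: inner_outer_self matrix_vector_mult_uminus)
  qed
  have "v \<bullet> (0 - x) \<le> 0" "v \<bullet> (2 *\<^sub>R x - x) \<le> 0"
    using vi[OF psd_0] vi[OF psd_scaleR[OF _ px, of 2]] by simp_all
  then show xv: "x \<bullet> v = 0"
    by (simp add: inner_commute inner_diff_right algebra_simps)
  have "(- v) ** x = 0"
    using psd_inner_eq_0[OF px pv] xv by simp
  then show vx: "v ** x = 0"
    by (simp add: matrix_mult_uminus_left)
  have "transpose x = x" "transpose v = v"
    using psd_imp_sym_mat[OF px] nsd_imp_sym_mat[OF pv] by (simp_all add: sym_mat_def)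
  then have "x ** v = transpose (v ** x)"
    by (simp add: matrix_transpose_mul)
  then show "x ** v = 0"
    using vx by (simp add: transpose_def vec_eq_iff)
qed

lemma proj_nsd_eq_diff_proj_psd:
  fixes Y :: "real^'n::finite^'n"
  assumes "sym_mat Y"
  shows "proj_nsd Y = Y - proj_psd Y"
  unfolding proj_nsd_eq_closest_point
proof (rule closest_point_eqI[OF convex_nsd closed_nsd])
  note moreau = moreau_decomposition[OF assms]
  show "Y - proj_psd Y \<in> {A. nsd A}"
    using moreau(2) by (simp add: nsd_def)
  fix y :: "real^'n^'n"
  assume "y \<in> {A. nsd A}"
  then have "0 \<le> proj_psd Y \<bullet> (- y)"
    using psd_inner_nonneg[OF moreau(1), of "- y"] by (simp add: nsd_def)
  then show "(Y - (Y - proj_psd Y)) \<bullet> (y - (Y - proj_psd Y)) \<le> 0"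
    using moreau(3) by (simp add: inner_diff_right)
qed

subsection \<open>Kernels of complementary PSD and NSD matrices\<close>

lemma sym_mat_range_eq_kernel_perp:
  fixes N :: "real^'n::finite^'n"
  assumes "sym_mat N" "\<And>w. N *v w = 0 \<Longrightarrow> w \<bullet> z = 0"
  shows "\<exists>s. z = N *v s"
proof -
  let ?f = "\<lambda>x. N *v x"
  have "adjoint ?f = ?f"
    using adjoint_matrix[of N] sym_mat_transpose_eq[OF assms(1)] by simp
  then have kernel: "?f -` {0} = (range ?f)\<^sup>\<bottom>"
    using ker_orthogonal_comp_adjoint[of ?f] by simp
  have "z \<in> (?f -` {0})\<^sup>\<bottom>"
    using assms(2) unfolding orthogonal_comp_def orthogonal_def by auto
  then have "z \<in> (range ?f)\<^sup>\<bottom>\<^sup>\<bottom>"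
    using kernel by simp
  also have "(range ?f)\<^sup>\<bottom>\<^sup>\<bottom> = range ?f"
    by (intro orthogonal_comp_self linear_subspace_image subspace_UNIV) simp
  finally show ?thesis
    by auto
qed

lemma complementary_psd_nsd_orthogonal:
  fixes x v :: "real^'n::finite^'n"
  assumes px: "psd x" and pv: "psd (- v)" and xv: "x ** v = 0"
    and y: "v *v y = 0" and z: "x *v z = 0"
    and zW: "\<And>w. x *v w = 0 \<Longrightarrow> v *v w = 0 \<Longrightarrow> w \<bullet> z = 0"
  shows "y \<bullet> z = 0"
proof -
  define N where "N = x - v"
  have sv: "sym_mat v" and sx: "sym_mat x"
    using nsd_imp_sym_mat[OF pv] psd_imp_sym_mat[OF px] .
  have kernel: "x *v w = 0 \<and> v *v w = 0" if "N *v w = 0" for w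
  proof -
    have "w \<bullet> (x *v w) + w \<bullet> ((- v) *v w) = 0"
      using that by (simp add: N_def matrix_vector_mult_diff_rdistrib matrix_vector_mult_uminus
          inner_diff_right)
    moreover have "0 \<le> w \<bullet> (x *v w)" "0 \<le> w \<bullet> ((- v) *v w)"
      using psd_quadratic_nonneg px pv by blast+
    ultimately have "x *v w = 0" "(- v) *v w = 0"
      using psd_quadratic_eq_0 px pv by (metis add_nonneg_eq_0_iff)+
    then show ?thesis
      by (simp add: matrix_vector_mult_uminus)
  qed
  obtain s where s: "z = N *v s"
    using sym_mat_range_eq_kernel_perp[of N z] sym_mat_diff[OF sx sv] zW kernel
    by (auto simp: N_def)
  have "x *v (v *v s) = 0"
    using xv by (simp add: matrix_vector_mul_assoc)
  then have "x *v (x *v s) = 0"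
    using z s by (simp add: N_def matrix_vector_mult_diff_rdistrib matrix_vector_mult_diff_distrib)
  then have "(x *v s) \<bullet> (x *v s) = 0"
    using sym_mat_inner_mult[OF sx, of s "x *v s"] by simp
  then have "z = - (v *v s)"
    using s by (simp add: N_def matrix_vector_mult_diff_rdistrib)
  then show ?thesis
    using y sym_mat_inner_mult[OF sv, of y s] by simp
qed

lemma subspace_common_kernel: "subspace {u::real^'n::finite. x *v u = 0 \<and> v *v u = 0}"
  unfolding subspace_def by (auto simp: matrix_vector_right_distrib matrix_vector_mult_scaleR)

lemma orthogonal_projection_matrix_exists:
  fixes W :: "(real^'n::finite) set"
  assumes "subspace W"
  shows "\<exists>P::real^'n^'n. sym_mat P \<and> (\<forall>z. P *v z \<in> W) \<and> (\<forall>w\<in>W. P *v w = w)"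
proof -
  obtain B where B: "B \<subseteq> W" "pairwise orthogonal B" "\<And>x. x \<in> B \<Longrightarrow> norm x = 1"
      "independent B" "span B = W"
    using orthonormal_basis_subspace[OF assms] by metis
  have fin: "finite B"
    using B(4) independent_imp_finite by blast
  define P where "P = (\<Sum>b\<in>B. outer b b)"
  have Pz: "P *v z = (\<Sum>b\<in>B. (b \<bullet> z) *\<^sub>R b)" for z
    unfolding P_def by (simp add: matrix_vector_mult_sum[OF fin] outer_matrix_vector_mult)
  have "sym_mat P"
    by (rule sym_matI) (simp add: P_def sum_component outer_def mult.commute)
  moreover have inW: "P *v z \<in> W" for z
    unfolding Pz B(5)[symmetric] by (intro span_sum span_scale span_base)
  moreover have "P *v w = w" if w: "w \<in> W" for w
  proof -
    define d where "d = w - P *v w"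
    have "d \<in> span B"
      using subspace_diff[OF assms w inW] B(5) d_def by simp
    moreover have "orthogonal d b" if b: "b \<in> B" for b
    proof -
      have "b \<bullet> (P *v w) = (\<Sum>b'\<in>B. (b' \<bullet> w) * (b \<bullet> b'))"
        by (simp add: Pz inner_sum_right)
      also have "\<dots> = (b \<bullet> w) * (b \<bullet> b) + (\<Sum>b'\<in>B - {b}. (b' \<bullet> w) * (b \<bullet> b'))"
        using fin b by (simp add: sum.remove)
      also have "(\<Sum>b'\<in>B - {b}. (b' \<bullet> w) * (b \<bullet> b')) = 0"
        using B(2) b by (intro sum.neutral) (auto simp: pairwise_def orthogonal_def)
      also have "b \<bullet> b = 1"
        using B(3)[OF b] by (simp add: norm_eq_1)
      finally show ?thesis
        by (simp add: d_def orthogonal_def inner_diff_right inner_commute)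
    qed
    ultimately have "orthogonal d d"
      using orthogonal_to_span by blast
    then show ?thesis
      by (simp add: d_def orthogonal_def)
  qed
  ultimately show ?thesis
    by blast
qed

subsection \<open>Limits of the difference quotients of the PSD projection\<close>

text \<open>The relations left on a limit \<open>p\<close> of the difference quotients of \<open>proj_psd\<close> at \<open>Z\<close> in
  direction \<open>H\<close>: by Moreau, the PSD and NSD parts of \<open>Z + t H\<close> are \<open>x + t q\<close> and \<open>v + t (H - q)\<close>,
  where \<open>x, v\<close> are those of \<open>Z\<close> and \<open>q\<close> is the quotient; expanding their complementarity and
  semidefiniteness to first order in \<open>t\<close> gives the conditions below.\<close>
definition psd_deriv_cond :: "'n::finite mat \<Rightarrow> 'n mat \<Rightarrow> 'n mat \<Rightarrow> 'n mat \<Rightarrow> bool" where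
  "psd_deriv_cond x v H p \<longleftrightarrow> sym_mat p \<and> p ** v + x ** (H - p) = 0 \<and>
     (\<forall>u. x *v u = 0 \<longrightarrow> 0 \<le> u \<bullet> (p *v u)) \<and>
     (\<forall>e. psd e \<longrightarrow> v \<bullet> e = 0 \<longrightarrow> (H - p) \<bullet> e \<le> 0) \<and>
     (\<forall>w. x *v w = 0 \<longrightarrow> v *v w = 0 \<longrightarrow> (p *v w) \<bullet> ((H - p) *v w) = 0)"

text \<open>A complementary PSD/NSD pair together with the orthogonal projection \<open>P\<close> onto the common
  kernel \<open>W\<close> of \<open>x\<close> and \<open>v\<close>.\<close>
locale complementary_pair =
  fixes x v P :: "'n::finite mat"
  assumes psd_x: "psd x" and nsd_v: "psd (- v)" and x_v: "x ** v = 0" and v_x: "v ** x = 0"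
    and sym_P: "sym_mat P" and x_P: "\<And>z. x *v (P *v z) = 0" and v_P: "\<And>z. v *v (P *v z) = 0"
    and P_fix: "\<And>w. x *v w = 0 \<Longrightarrow> v *v w = 0 \<Longrightarrow> P *v w = w"
begin

lemma sym_x: "sym_mat x"
  using psd_x by (rule psd_imp_sym_mat)

lemma sym_v: "sym_mat v"
  using nsd_v by (rule nsd_imp_sym_mat)

lemma P_idem: "P *v (P *v z) = P *v z"
  by (rule P_fix[OF x_P v_P])

lemma inner_P: "(P *v y) \<bullet> z = y \<bullet> (P *v z)"
  using sym_mat_inner_mult[OF sym_P] by simp

lemma matrix_mult_P_P: "P ** P = P"
  by (metis P_idem matrix_eq matrix_vector_mul_assoc)

lemma matrix_mult_v_P: "v ** P = 0"
  by (rule matrix_eq_0I) (simp add: matrix_vector_mul_assoc[symmetric] v_P)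

lemma row_P: "P$i = P *v axis i 1"
  by (simp add: vec_eq_iff matrix_vector_mult_axis sym_matD[OF sym_P])

definition compress :: "'n mat \<Rightarrow> 'n mat" where
  "compress M = P ** M ** P"

lemma compress_inner: "compress A \<bullet> B = A \<bullet> compress B"
proof -
  have "compress A \<bullet> B = (P ** A) \<bullet> (B ** transpose P)"
    unfolding compress_def by (rule inner_matrix_mult_right)
  also have "\<dots> = A \<bullet> (transpose P ** (B ** transpose P))"
    by (rule inner_matrix_mult_left)
  finally show ?thesis
    using sym_mat_transpose_eq[OF sym_P] by (simp add: compress_def matrix_mul_assoc)
qed

lemma compress_idem: "compress (compress M) = compress M"
proof -
  have "compress (compress M) = (P ** P) ** M ** (P ** P)"
    by (simp add: compress_def matrix_mul_assoc)
  then show ?thesis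
    by (simp add: matrix_mult_P_P compress_def)
qed

lemma compress_inner_compress: "compress A \<bullet> compress B = B \<bullet> compress A"
proof -
  have "compress A \<bullet> compress B = compress (compress A) \<bullet> B"
    by (rule compress_inner[symmetric])
  then show ?thesis
    by (simp add: compress_idem inner_commute)
qed

lemma compress_diff: "compress (A - B) = compress A - compress B"
  by (simp add: compress_def matrix_mult_diff_left matrix_mult_diff_right)

lemma compress_v: "compress v = 0"
  by (simp add: compress_def matrix_mul_assoc[symmetric] matrix_mult_v_P)

lemma sym_mat_compress: "sym_mat M \<Longrightarrow> sym_mat (compress M)"
  unfolding sym_mat_def compress_def using sym_mat_transpose_eq[OF sym_P]
  by (simp add: matrix_transpose_mul matrix_mul_assoc)

lemma compress_matrix_vector_mult: "compress M *v u = P *v (M *v (P *v u))"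
  by (simp add: compress_def matrix_vector_mul_assoc matrix_mul_assoc)

lemma compress_row: "sym_mat M \<Longrightarrow> (compress M)$i = P *v (M *v (P$i))"
  by (simp add: compress_def sym_mat_matrix_mult_row[OF sym_P] sym_mat_matrix_mult_row)

lemma psd_deriv_cond_compress:
  assumes "psd_deriv_cond x v H p"
  shows "psd (compress p)" and "v \<bullet> compress p = 0"
proof -
  have sym_p: "sym_mat p" and psd_on_kernel: "\<And>u. x *v u = 0 \<Longrightarrow> 0 \<le> u \<bullet> (p *v u)"
    using assms by (auto simp: psd_deriv_cond_def)
  show "psd (compress p)"
    unfolding psd_def
  proof (intro conjI allI)
    show "sym_mat (compress p)"
      using sym_p by (rule sym_mat_compress)
    fix u
    have "u \<bullet> (compress p *v u) = (P *v u) \<bullet> (p *v (P *v u))"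
      by (simp add: compress_matrix_vector_mult inner_P)
    then show "0 \<le> u \<bullet> (compress p *v u)"
      using psd_on_kernel[OF x_P] by simp
  qed
  show "v \<bullet> compress p = 0"
    by (simp add: compress_inner[symmetric] compress_v)
qed

lemma psd_deriv_cond_kernel:
  assumes "psd_deriv_cond x v H p"
  shows "x *v w = 0 \<Longrightarrow> v *v w = 0 \<Longrightarrow> v *v (p *v w) = 0"
    and "v *v w = 0 \<Longrightarrow> x *v ((H - p) *v w) = 0"
proof -
  have sym_p: "sym_mat p" and lin: "p ** v + x ** (H - p) = 0"
    using assms by (auto simp: psd_deriv_cond_def)
  have lin_vec: "p *v (v *v u) + x *v ((H - p) *v u) = 0" for u
    using arg_cong[OF lin, of "\<lambda>M. M *v u"]
    by (simp add: matrix_vector_mult_add_rdistrib matrix_vector_mul_assoc)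
  show "x *v ((H - p) *v w) = 0" if "v *v w = 0"
    using lin_vec[of w] that by simp
  assume w: "x *v w = 0" "v *v w = 0"
  define g where "g = v *v (p *v w)"
  have "g \<bullet> g = (p *v (v *v g)) \<bullet> w"
    using sym_mat_inner_mult[OF sym_v, of g "p *v w"] sym_mat_inner_mult[OF sym_p, of "v *v g" w]
    by (simp add: g_def inner_commute)
  also have "\<dots> = - ((x *v ((H - p) *v g)) \<bullet> w)"
    using arg_cong[OF lin_vec[of g], of "\<lambda>y. y \<bullet> w"]
    by (simp add: inner_add_left eq_neg_iff_add_eq_0)
  also have "\<dots> = - (((H - p) *v g) \<bullet> (x *v w))"
    using sym_mat_inner_mult[OF sym_x, of "(H - p) *v g" w] by (simp add: inner_commute)
  finally show "v *v (p *v w) = 0"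
    using w by (simp add: g_def)
qed

text \<open>Complementarity survives compression to \<open>W\<close>: the row-wise parts of \<open>p w\<close> and
  \<open>(H - p) w\<close> off \<open>W\<close> lie in the ranges of \<open>v\<close> and \<open>x\<close>, which are orthogonal.\<close>
lemma psd_deriv_cond_compress_orthogonal:
  assumes sym_H: "sym_mat H" and cond: "psd_deriv_cond x v H p"
  shows "compress p \<bullet> compress (H - p) = 0"
proof -
  have sym_p: "sym_mat p"
    and orth_W: "\<And>w. x *v w = 0 \<Longrightarrow> v *v w = 0 \<Longrightarrow> (p *v w) \<bullet> ((H - p) *v w) = 0"
    using cond by (auto simp: psd_deriv_cond_def)
  have row: "(compress p)$i \<bullet> (compress (H - p))$i = 0" for i
  proof -
    define y where "y = p *v P$i"
    define z where "z = (H - p) *v P$i"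
    have W: "x *v P$i = 0" "v *v P$i = 0"
      using x_P v_P row_P by metis+
    have "(P *v y) \<bullet> (P *v z) = y \<bullet> z - (y - P *v y) \<bullet> (z - P *v z)"
      by (simp add: inner_P P_idem inner_diff_left inner_diff_right)
    moreover have "(y - P *v y) \<bullet> (z - P *v z) = 0"
    proof (rule complementary_psd_nsd_orthogonal[OF psd_x nsd_v x_v])
      show "v *v (y - P *v y) = 0"
        using psd_deriv_cond_kernel(1)[OF cond W] v_P by (simp add: y_def matrix_vector_mult_diff_distrib)
      show "x *v (z - P *v z) = 0"
        using psd_deriv_cond_kernel(2)[OF cond W(2)] x_P by (simp add: z_def matrix_vector_mult_diff_distrib)
      show "w \<bullet> (z - P *v z) = 0" if "x *v w = 0" "v *v w = 0" for w
        using inner_P[of w z] P_fix[OF that] by (simp add: inner_diff_right)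
    qed
    moreover have "(compress p)$i = P *v y" "(compress (H - p))$i = P *v z"
      using compress_row sym_p sym_mat_diff[OF sym_H sym_p] by (auto simp: y_def z_def)
    ultimately show ?thesis
      using orth_W[OF W] by (simp add: y_def z_def)
  qed
  show ?thesis
    using row by (simp add: inner_vec_def)
qed

text \<open>A symmetric \<open>d\<close> with \<open>d v = x d\<close> has \<open>tr (d x d) = tr (d v d)\<close>, a nonnegative and a
  nonpositive quantity; so both vanish, every row of \<open>d\<close> lies in \<open>W\<close>, and \<open>d\<close> is unchanged by
  compression.\<close>
lemma compress_eq_if_intertwines:
  assumes sym_d: "sym_mat d" and intertwines: "d ** v = x ** d"
  shows "compress d = d"
proof -
  have rows: "d \<bullet> (d ** M) = (\<Sum>i\<in>UNIV. d$i \<bullet> (M *v d$i))" if "sym_mat M" for M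
    by (simp add: inner_vec_def[of d "d ** M"] sym_mat_matrix_mult_row[OF that])
  have "(\<Sum>i\<in>UNIV. d$i \<bullet> (x *v d$i)) = d \<bullet> (d ** x)"
    by (rule rows[OF sym_x, symmetric])
  also have "\<dots> = d \<bullet> (x ** d)"
    using inner_transpose[of d "x ** d"] sym_mat_transpose_eq[OF sym_d] sym_mat_transpose_eq[OF sym_x]
    by (simp add: matrix_transpose_mul)
  also have "\<dots> = (\<Sum>i\<in>UNIV. d$i \<bullet> (v *v d$i))"
    using rows[OF sym_v] intertwines by simp
  finally have "(\<Sum>i\<in>UNIV. d$i \<bullet> (x *v d$i)) = (\<Sum>i\<in>UNIV. d$i \<bullet> (v *v d$i))" .
  moreover have "0 \<le> d$i \<bullet> (x *v d$i)" "0 \<le> - (d$i \<bullet> (v *v d$i))" for i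
    using psd_quadratic_nonneg[OF psd_x] psd_quadratic_nonneg[OF nsd_v, of "d$i"]
    by (simp_all add: matrix_vector_mult_uminus)
  ultimately have "(\<Sum>i\<in>UNIV. d$i \<bullet> (x *v d$i)) = 0" "(\<Sum>i\<in>UNIV. - (d$i \<bullet> (v *v d$i))) = 0"
    using sum_nonneg[of UNIV "\<lambda>i. d$i \<bullet> (x *v d$i)"]
      sum_nonneg[of UNIV "\<lambda>i. - (d$i \<bullet> (v *v d$i))"] by (simp_all add: sum_negf)
  then have "d$i \<bullet> (x *v d$i) = 0" "d$i \<bullet> ((- v) *v d$i) = 0" for i
    using \<open>\<And>i. 0 \<le> d$i \<bullet> (x *v d$i)\<close> \<open>\<And>i. 0 \<le> - (d$i \<bullet> (v *v d$i))\<close>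
    by (simp_all add: sum_nonneg_eq_0_iff matrix_vector_mult_uminus)
  then have "x *v d$i = 0" "v *v d$i = 0" for i
    using psd_quadratic_eq_0[OF psd_x] psd_quadratic_eq_0[OF nsd_v]
    by (simp_all add: matrix_vector_mult_uminus)
  then have d_P: "d ** P = d"
    by (simp add: vec_eq_iff[of "d ** P"] sym_mat_matrix_mult_row[OF sym_P] P_fix)
  have "transpose (d ** P) = P ** d"
    using sym_mat_transpose_eq[OF sym_d] sym_mat_transpose_eq[OF sym_P]
    by (simp add: matrix_transpose_mul)
  then have "P ** d = d"
    using d_P sym_mat_transpose_eq[OF sym_d] by simp
  then show ?thesis
    using d_P by (simp add: compress_def)
qed

text \<open>On \<open>W\<close> the compression of a solution is the projection of the compression of \<open>H\<close> onto the
  PSD cone, which is unique; off \<open>W\<close> the solution is pinned down by \<open>p v + x (H - p) = 0\<close>.\<close>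
lemma psd_deriv_cond_unique:
  assumes sym_H: "sym_mat H" and cond: "psd_deriv_cond x v H p" and cond': "psd_deriv_cond x v H p'"
  shows "p = p'"
proof -
  have sym: "sym_mat p" "sym_mat p'" and lin: "p ** v + x ** (H - p) = 0" "p' ** v + x ** (H - p') = 0"
    and dual: "\<And>e. psd e \<Longrightarrow> v \<bullet> e = 0 \<Longrightarrow> (H - p) \<bullet> e \<le> 0"
      "\<And>e. psd e \<Longrightarrow> v \<bullet> e = 0 \<Longrightarrow> (H - p') \<bullet> e \<le> 0"
    using cond cond' by (auto simp: psd_deriv_cond_def)
  define d where "d = p - p'"
  have "d ** v - x ** d = (p ** v + x ** (H - p)) - (p' ** v + x ** (H - p'))"
    by (simp add: d_def matrix_mult_diff_left matrix_mult_diff_right algebra_simps)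
  then have "compress d = d"
    using compress_eq_if_intertwines[of d] sym_mat_diff[OF sym] lin by (simp add: d_def)
  then have compressed: "d \<bullet> M = (compress p - compress p') \<bullet> compress M" for M
    by (metis compress_diff compress_inner d_def)
  have "d \<bullet> d = d \<bullet> (H - p') - d \<bullet> (H - p)"
    by (simp add: d_def inner_diff_right[symmetric])
  also have "\<dots> = (compress p - compress p') \<bullet> compress (H - p')
      - (compress p - compress p') \<bullet> compress (H - p)"
    by (simp only: compressed)
  finally have "d \<bullet> d = (compress p - compress p') \<bullet> compress (H - p')
      - (compress p - compress p') \<bullet> compress (H - p)" .
  moreover have "compress p \<bullet> compress (H - p) = 0" "compress p' \<bullet> compress (H - p') = 0"
    using psd_deriv_cond_compress_orthogonal[OF sym_H] cond cond' by blast+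
  moreover have "compress p \<bullet> compress (H - p') \<le> 0" "compress p' \<bullet> compress (H - p) \<le> 0"
    using dual(2)[OF psd_deriv_cond_compress[OF cond]] dual(1)[OF psd_deriv_cond_compress[OF cond']]
    by (simp_all add: compress_inner_compress)
  ultimately have "d \<bullet> d \<le> 0"
    by (simp add: inner_diff_left)
  then have "d = 0"
    by (metis inner_eq_zero_iff inner_ge_zero order_antisym)
  then show ?thesis
    by (simp add: d_def)
qed

end

subsection \<open>The directional derivative of the PSD projection\<close>

definition proj_psd_quot :: "'n::finite mat \<Rightarrow> 'n mat \<Rightarrow> real \<Rightarrow> 'n mat" where
  "proj_psd_quot Z H t = (proj_psd (Z + t *\<^sub>R H) - proj_psd Z) /\<^sub>R t"

lemma proj_psd_quot_moreau:
  fixes Z H :: "'n::finite mat"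
  assumes "sym_mat Z" "sym_mat H" "t > 0"
  defines "x \<equiv> proj_psd Z" and "v \<equiv> Z - proj_psd Z" and "q \<equiv> proj_psd_quot Z H t"
  shows "psd (x + t *\<^sub>R q)" "psd (- (v + t *\<^sub>R (H - q)))" "(x + t *\<^sub>R q) ** (v + t *\<^sub>R (H - q)) = 0"
proof -
  have "sym_mat (Z + t *\<^sub>R H)"
    using assms(1,2) by (intro sym_mat_add sym_mat_scaleR)
  note moreau = moreau_decomposition[OF this]
  have "proj_psd (Z + t *\<^sub>R H) = x + t *\<^sub>R q"
    using assms(3) by (simp add: x_def q_def proj_psd_quot_def)
  moreover have "Z + t *\<^sub>R H - (x + t *\<^sub>R q) = v + t *\<^sub>R (H - q)"
    by (simp add: v_def x_def scaleR_diff_right)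
  ultimately show "psd (x + t *\<^sub>R q)" "psd (- (v + t *\<^sub>R (H - q)))"
      "(x + t *\<^sub>R q) ** (v + t *\<^sub>R (H - q)) = 0"
    using moreau(1,2,5) by simp_all
qed

lemma sym_mat_proj_psd_quot: "sym_mat Z \<Longrightarrow> sym_mat H \<Longrightarrow> sym_mat (proj_psd_quot Z H t)"
  unfolding proj_psd_quot_def
  by (intro sym_mat_scaleR sym_mat_diff psd_imp_sym_mat[OF psd_proj_psd])

lemma firmly_nonexpansive_proj_psd_quot:
  "t > 0 \<Longrightarrow> firmly_nonexpansive_on UNIV (\<lambda>H. proj_psd_quot Z H t)"
  unfolding proj_psd_quot_def
  by (rule firmly_nonexpansive_on_diff_quotient[OF firmly_nonexpansive_proj_psd])

lemma norm_proj_psd_quot_le: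
  assumes "t > 0"
  shows "norm (proj_psd_quot Z H t) \<le> norm H"
proof -
  have "norm (proj_psd_quot Z H t - proj_psd_quot Z 0 t) \<le> norm (H - 0)"
    by (rule firmly_nonexpansive_on_imp_nonexpansive[OF firmly_nonexpansive_proj_psd_quot[OF assms]])
      simp_all
  then show ?thesis
    by (simp add: proj_psd_quot_def)
qed

lemma proj_psd_quot_conds:
  fixes Z H :: "'n::finite mat"
  assumes "sym_mat Z" "sym_mat H" "t > 0"
  defines "x \<equiv> proj_psd Z" and "v \<equiv> Z - proj_psd Z" and "q \<equiv> proj_psd_quot Z H t"
  shows "q ** v + x ** (H - q) + t *\<^sub>R (q ** (H - q)) = 0"
    and "x *v u = 0 \<Longrightarrow> 0 \<le> u \<bullet> (q *v u)"
    and "psd e \<Longrightarrow> v \<bullet> e = 0 \<Longrightarrow> (H - q) \<bullet> e \<le> 0"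
    and "x *v w = 0 \<Longrightarrow> v *v w = 0 \<Longrightarrow> (q *v w) \<bullet> ((H - q) *v w) = 0"
proof -
  note quot = proj_psd_quot_moreau[OF assms(1-3), folded x_def v_def q_def]
  have "x ** v = 0"
    using moreau_decomposition(5)[OF assms(1)] by (simp add: x_def v_def)
  then have "(x + t *\<^sub>R q) ** (v + t *\<^sub>R (H - q)) = t *\<^sub>R (q ** v + x ** (H - q) + t *\<^sub>R (q ** (H - q)))"
    by (simp add: matrix_add_ldistrib matrix_mult_add_right scalar_matrix_assoc[symmetric]
        matrix_scalar_ac scaleR_add_right)
  then show lin: "q ** v + x ** (H - q) + t *\<^sub>R (q ** (H - q)) = 0"
    using quot(3) assms(3) by simp
  show "0 \<le> u \<bullet> (q *v u)" if "x *v u = 0"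
    using psd_quadratic_nonneg[OF quot(1), of u] that assms(3)
    by (simp add: matrix_vector_mult_add_rdistrib scaleR_matrix_vector_assoc[symmetric]
        zero_le_mult_iff)
  show "(H - q) \<bullet> e \<le> 0" if "psd e" "v \<bullet> e = 0"
  proof -
    have "0 \<le> e \<bullet> (- (v + t *\<^sub>R (H - q)))"
      by (rule psd_inner_nonneg[OF that(1) quot(2)])
    also have "\<dots> = - (t * ((H - q) \<bullet> e))"
      using that(2) by (simp add: inner_add_right inner_diff_right inner_commute)
    finally show ?thesis
      using assms(3) by (simp add: mult_le_0_iff)
  qed
  assume w: "x *v w = 0" "v *v w = 0"
  have "sym_mat x"
    unfolding x_def by (rule psd_imp_sym_mat[OF psd_proj_psd])
  then have "w \<bullet> (x *v ((H - q) *v w)) = 0"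
    using sym_mat_inner_mult[of x w "(H - q) *v w"] w(1) by simp
  then have "w \<bullet> ((q ** v + x ** (H - q) + t *\<^sub>R (q ** (H - q))) *v w)
      = t * (w \<bullet> (q *v ((H - q) *v w)))"
    using w by (simp add: matrix_vector_mult_add_rdistrib matrix_vector_mul_assoc[symmetric]
        scaleR_matrix_vector_assoc[symmetric] inner_add_right)
  then have "w \<bullet> (q *v ((H - q) *v w)) = 0"
    using lin assms(3) by simp
  then show "(q *v w) \<bullet> ((H - q) *v w) = 0"
    using sym_mat_inner_mult[of q w "(H - q) *v w"] sym_mat_proj_psd_quot[OF assms(1,2)]
    by (simp add: q_def)
qed

lemma psd_deriv_cond_of_limit:
  fixes Z H :: "'n::finite mat"
  assumes sym_Z: "sym_mat Z" and sym_H: "sym_mat H"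
    and pos: "\<And>k. s k > 0" and s: "s \<longlonglongrightarrow> 0" and lim: "(\<lambda>k. proj_psd_quot Z H (s k)) \<longlonglongrightarrow> p"
  shows "psd_deriv_cond (proj_psd Z) (Z - proj_psd Z) H p"
proof -
  define x where "x = proj_psd Z"
  define v where "v = Z - proj_psd Z"
  define q where "q k = proj_psd_quot Z H (s k)" for k
  note conds = proj_psd_quot_conds[OF sym_Z sym_H pos, folded x_def v_def, folded q_def]
  have lim_q: "q \<longlonglongrightarrow> p"
    using lim unfolding q_def .
  have "q k \<in> Sn" for k
    using sym_mat_proj_psd_quot[OF sym_Z sym_H] by (simp add: Sn_def q_def)
  then have "p \<in> Sn"
    using closed_sequentially[OF closed_Sn _ lim_q] by blast
  then have "sym_mat p"
    by (simp add: Sn_def)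
  moreover have "p ** v + x ** (H - p) = 0"
  proof -
    have "(\<lambda>k. q k ** v + x ** (H - q k) + s k *\<^sub>R (q k ** (H - q k)))
        \<longlonglongrightarrow> p ** v + x ** (H - p) + 0 *\<^sub>R (p ** (H - p))"
      by (intro tendsto_add tendsto_scaleR tendsto_matrix_mult tendsto_diff tendsto_const lim_q s)
    then have "(\<lambda>k. 0) \<longlonglongrightarrow> p ** v + x ** (H - p)"
      using conds(1) by simp
    then have "0 = p ** v + x ** (H - p)"
      by (rule LIMSEQ_unique[OF tendsto_const])
    then show ?thesis
      by simp
  qed
  moreover have "0 \<le> u \<bullet> (p *v u)" if "x *v u = 0" for u
  proof (rule LIMSEQ_le_const)
    show "(\<lambda>k. u \<bullet> (q k *v u)) \<longlonglongrightarrow> u \<bullet> (p *v u)"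
      by (intro tendsto_inner tendsto_const tendsto_matrix_vector_mult lim_q)
    show "\<exists>N. \<forall>k\<ge>N. 0 \<le> u \<bullet> (q k *v u)"
      using conds(2)[OF that] by blast
  qed
  moreover have "(H - p) \<bullet> e \<le> 0" if "psd e" "v \<bullet> e = 0" for e
  proof (rule LIMSEQ_le_const2)
    show "(\<lambda>k. (H - q k) \<bullet> e) \<longlonglongrightarrow> (H - p) \<bullet> e"
      by (intro tendsto_inner tendsto_const tendsto_diff lim_q)
    show "\<exists>N. \<forall>k\<ge>N. (H - q k) \<bullet> e \<le> 0"
      using conds(3)[OF that] by blast
  qed
  moreover have "(p *v w) \<bullet> ((H - p) *v w) = 0" if "x *v w = 0" "v *v w = 0" for w
  proof -
    have "(\<lambda>k. (q k *v w) \<bullet> ((H - q k) *v w)) \<longlonglongrightarrow> (p *v w) \<bullet> ((H - p) *v w)"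
      by (intro tendsto_inner tendsto_matrix_vector_mult tendsto_diff tendsto_const lim_q)
    then have "(\<lambda>k. 0) \<longlonglongrightarrow> (p *v w) \<bullet> ((H - p) *v w)"
      using conds(4)[OF that] by simp
    then have "0 = (p *v w) \<bullet> ((H - p) *v w)"
      by (rule LIMSEQ_unique[OF tendsto_const])
    then show ?thesis
      by simp
  qed
  ultimately show ?thesis
    by (simp add: psd_deriv_cond_def x_def v_def)
qed

text \<open>If every sequence \<open>s k \<down> 0\<close> along which \<open>f (s k)\<close> converges yields the same limit, then
  a bounded \<open>f\<close> converges as \<open>t \<down> 0\<close>: otherwise a second sequence stays away from the limit
  along the first, and compactness produces a different cluster point.\<close>
lemma tendsto_at_right_0_if_unique_cluster:
  fixes f :: "real \<Rightarrow> 'a::heine_borel"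
  assumes bounded: "\<And>t. t > 0 \<Longrightarrow> f t \<in> K" "bounded K"
    and unique: "\<And>s s' p p'. (\<And>k. s k > 0) \<Longrightarrow> s \<longlonglongrightarrow> 0 \<Longrightarrow> (\<lambda>k. f (s k)) \<longlonglongrightarrow> p \<Longrightarrow>
        (\<And>k. s' k > 0) \<Longrightarrow> s' \<longlonglongrightarrow> 0 \<Longrightarrow> (\<lambda>k. f (s' k)) \<longlonglongrightarrow> p' \<Longrightarrow> p = p'"
  shows "\<exists>L. (f \<longlongrightarrow> L) (at_right 0)"
proof -
  have cluster: "\<exists>l r. strict_mono r \<and> (((\<lambda>k. f (s k)) \<circ> r) \<longlonglongrightarrow> l)"
    if "\<And>k. s k > 0" for s :: "nat \<Rightarrow> real"
  proof -
    have "bounded (range (\<lambda>k. f (s k)))"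
      using bounded(2) by (rule bounded_subset) (use bounded(1) that in auto)
    then show ?thesis
      by (rule bounded_imp_convergent_subsequence)
  qed
  define s0 where "s0 k = inverse (real (Suc k))" for k
  have s0: "\<And>k. s0 k > 0" "s0 \<longlonglongrightarrow> 0"
    unfolding s0_def by (simp, rule LIMSEQ_inverse_real_of_nat)
  obtain l r where r: "strict_mono r" and lim: "((\<lambda>k. f (s0 k)) \<circ> r) \<longlonglongrightarrow> l"
    using cluster[of s0, OF s0(1)] by blast
  show ?thesis
  proof (rule exI[of _ l], rule ccontr)
    assume "\<not> (f \<longlongrightarrow> l) (at_right 0)"
    then obtain e where "e > 0" and far: "\<not> eventually (\<lambda>t. dist (f t) l < e) (at_right 0)"
      unfolding tendsto_iff by blast
    have "\<exists>t>0. t < s0 k \<and> e \<le> dist (f t) l" for k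
    proof (rule ccontr)
      assume "\<not> (\<exists>t>0. t < s0 k \<and> e \<le> dist (f t) l)"
      then have "eventually (\<lambda>t. dist (f t) l < e) (at_right 0)"
        unfolding eventually_at_right_field using s0(1)[of k] by (meson not_le)
      then show False
        using far by blast
    qed
    then obtain s1 where s1: "\<And>k. s1 k > 0" "\<And>k. s1 k < s0 k" "\<And>k. e \<le> dist (f (s1 k)) l"
      by metis
    have "s1 \<longlonglongrightarrow> 0"
    proof (rule real_tendsto_sandwich[OF always_eventually always_eventually tendsto_const s0(2)])
      show "\<forall>k. 0 \<le> s1 k" "\<forall>k. s1 k \<le> s0 k"
        using s1(1,2) less_imp_le by blast+
    qed
    obtain l1 r1 where r1: "strict_mono r1" and lim1: "((\<lambda>k. f (s1 k)) \<circ> r1) \<longlonglongrightarrow> l1"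
      using cluster[of s1, OF s1(1)] by blast
    have "l = l1"
      using unique[where s="s0 \<circ> r" and s'="s1 \<circ> r1", OF _ LIMSEQ_subseq_LIMSEQ[OF s0(2) r] _ _
          LIMSEQ_subseq_LIMSEQ[OF \<open>s1 \<longlonglongrightarrow> 0\<close> r1]] s0(1) s1(1) lim lim1
      by (simp add: o_def)
    moreover have "e \<le> dist l1 l"
    proof (rule LIMSEQ_le_const[OF tendsto_dist[OF lim1 tendsto_const]])
      show "\<exists>N. \<forall>k\<ge>N. e \<le> dist (((\<lambda>k. f (s1 k)) \<circ> r1) k) l"
        using s1(3) by simp
    qed
    ultimately show False
      using \<open>e > 0\<close> by simp
  qed
qed

lemma proj_psd_quot_tendsto:
  fixes Z H :: "'n::finite mat"
  assumes sym_Z: "sym_mat Z" and sym_H: "sym_mat H"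
  shows "(proj_psd_quot Z H \<longlongrightarrow> dir_deriv proj_psd Z H) (at_right 0)"
proof -
  define x where "x = proj_psd Z"
  define v where "v = Z - proj_psd Z"
  have moreau: "psd x" "psd (- v)" "x ** v = 0" "v ** x = 0"
    using moreau_decomposition[OF sym_Z] by (simp_all add: x_def v_def)
  obtain P :: "'n mat" where P: "sym_mat P" "\<And>z. x *v (P *v z) = 0 \<and> v *v (P *v z) = 0"
    "\<And>w. x *v w = 0 \<Longrightarrow> v *v w = 0 \<Longrightarrow> P *v w = w"
    using orthogonal_projection_matrix_exists[OF subspace_common_kernel[of x v]] by auto
  interpret complementary_pair x v P
    using moreau P by unfold_locales auto
  have "\<exists>L. (proj_psd_quot Z H \<longlongrightarrow> L) (at_right 0)"
  proof (rule tendsto_at_right_0_if_unique_cluster)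
    show "proj_psd_quot Z H t \<in> cball 0 (norm H)" if "t > 0" for t
      using norm_proj_psd_quot_le[OF that] by simp
    show "p = p'" if "\<And>k. s k > 0" "s \<longlonglongrightarrow> 0" "(\<lambda>k. proj_psd_quot Z H (s k)) \<longlonglongrightarrow> p"
      "\<And>k. s' k > 0" "s' \<longlonglongrightarrow> 0" "(\<lambda>k. proj_psd_quot Z H (s' k)) \<longlonglongrightarrow> p'" for s s' p p'
      using psd_deriv_cond_of_limit[OF sym_Z sym_H that(1-3), folded v_def, folded x_def]
        psd_deriv_cond_of_limit[OF sym_Z sym_H that(4-6), folded v_def, folded x_def]
      by (rule psd_deriv_cond_unique[OF sym_H])
  qed (rule bounded_cball)
  then obtain L where L: "(proj_psd_quot Z H \<longlongrightarrow> L) (at_right 0)"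
    by blast
  moreover have "dir_deriv proj_psd Z H = L"
    using tendsto_Lim[OF trivial_limit_at_right_real L]
    by (simp add: dir_deriv_def proj_psd_quot_def[abs_def])
  ultimately show ?thesis
    by simp
qed

lemma sym_mat_dir_deriv_proj_psd:
  assumes "sym_mat Z" "sym_mat H"
  shows "sym_mat (dir_deriv proj_psd Z H)"
proof -
  have "\<forall>\<^sub>F t in at_right 0. proj_psd_quot Z H t \<in> Sn"
    using sym_mat_proj_psd_quot[OF assms] by (simp add: Sn_def)
  then have "dir_deriv proj_psd Z H \<in> Sn"
    by (rule Lim_in_closed_set[OF closed_Sn _ trivial_limit_at_right_real proj_psd_quot_tendsto[OF assms]])
  then show ?thesis
    by (simp add: Sn_def)
qed

lemma dir_deriv_proj_nsd:
  assumes "sym_mat Z" "sym_mat H"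
  shows "dir_deriv proj_nsd Z H = H - dir_deriv proj_psd Z H"
proof -
  have "(proj_nsd (Z + t *\<^sub>R H) - proj_nsd Z) /\<^sub>R t = H - proj_psd_quot Z H t" if "t > 0" for t
  proof -
    have "proj_nsd (Z + t *\<^sub>R H) - proj_nsd Z = t *\<^sub>R H - (proj_psd (Z + t *\<^sub>R H) - proj_psd Z)"
      using proj_nsd_eq_diff_proj_psd[OF assms(1)]
        proj_nsd_eq_diff_proj_psd[OF sym_mat_add[OF assms(1) sym_mat_scaleR[OF assms(2)]]]
      by (simp add: algebra_simps)
    then show ?thesis
      using that by (simp add: proj_psd_quot_def scaleR_diff_right)
  qed
  then have "eventually (\<lambda>t. (proj_nsd (Z + t *\<^sub>R H) - proj_nsd Z) /\<^sub>R t = H - proj_psd_quot Z H t)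
      (at_right 0)"
    by (rule eventually_mono[OF eventually_at_right_less[of 0]])
  moreover have "((\<lambda>t. H - proj_psd_quot Z H t) \<longlongrightarrow> H - dir_deriv proj_psd Z H) (at_right 0)"
    by (intro tendsto_diff tendsto_const proj_psd_quot_tendsto[OF assms])
  ultimately have "((\<lambda>t. (proj_nsd (Z + t *\<^sub>R H) - proj_nsd Z) /\<^sub>R t) \<longlongrightarrow> H - dir_deriv proj_psd Z H)
      (at_right 0)"
    by (simp only: tendsto_cong)
  then show ?thesis
    unfolding dir_deriv_def by (rule tendsto_Lim[OF trivial_limit_at_right_real])
qed

lemma dir_deriv_proj_psd_0: "dir_deriv proj_psd Z 0 = 0"
  unfolding dir_deriv_def by (rule tendsto_Lim) simp_all

lemma firmly_nonexpansive_dir_deriv_proj_psd: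
  assumes "sym_mat Z"
  shows "firmly_nonexpansive_on Sn (dir_deriv proj_psd Z)"
proof (rule firmly_nonexpansive_on_limit[OF trivial_limit_at_right_real])
  show "\<forall>\<^sub>F t in at_right 0. firmly_nonexpansive_on Sn (\<lambda>H. proj_psd_quot Z H t)"
    using eventually_at_right_less[of 0]
    by (rule eventually_mono) (use firmly_nonexpansive_proj_psd_quot in \<open>auto simp: firmly_nonexpansive_on_def\<close>)
  show "((\<lambda>t. proj_psd_quot Z H t) \<longlongrightarrow> dir_deriv proj_psd Z H) (at_right 0)" if "H \<in> Sn" for H
    using proj_psd_quot_tendsto[OF assms] that by (simp add: Sn_def)
qed

subsection \<open>The projection onto the range of the adjoint constraint map\<close>

lemma linear_Aop: "linear (Aop A)"
  by (rule linearI) (simp_all add: Aop_def vec_eq_iff inner_add_right)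

lemma linear_Aadj: "linear (Aadj A)"
  by (rule linearI) (simp_all add: Aadj_def scaleR_add_left sum.distrib scaleR_sum_right)

lemma inner_Aadj: "Aadj A y \<bullet> X = y \<bullet> Aop A X"
proof -
  have "Aadj A y \<bullet> X = (\<Sum>i\<in>UNIV. y$i * (A i \<bullet> X))"
    by (simp add: Aadj_def inner_sum_left)
  also have "\<dots> = y \<bullet> Aop A X"
    by (simp add: Aop_def inner_vec_def)
  finally show ?thesis .
qed

lemma Aop_Aadj: "Aop A (Aadj A y) = (\<chi> i j. A i \<bullet> A j) *v y"
  by (simp add: Aop_def Aadj_def vec_eq_iff inner_sum_right matrix_vector_mult_def mult.commute)

lemma Aadj_in_Sn: "(\<And>i. A i \<in> Sn) \<Longrightarrow> Aadj A y \<in> Sn"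
  unfolding Sn_def Aadj_def by (auto intro!: sym_matI sum.cong simp: sum_component sym_matD)

text \<open>Surjectivity of \<open>Aop\<close> makes the Gram matrix of the \<open>A i\<close> injective, hence invertible.\<close>
lemma gram_matrix_inv:
  fixes A :: "'m::finite \<Rightarrow> 'n::finite mat"
  assumes "Aop A ` Sn = UNIV"
  shows "(\<chi> i j. A i \<bullet> A j) ** matrix_inv (\<chi> i j. A i \<bullet> A j) = mat 1"
proof -
  define G :: "real^'m^'m" where "G = (\<chi> i j. A i \<bullet> A j)"
  have "y = 0" if "G *v y = 0" for y
  proof -
    have "Aadj A y \<bullet> Aadj A y = 0"
      using that by (simp add: inner_Aadj Aop_Aadj G_def)
    moreover obtain X where "Aop A X = y"
      using assms by (metis UNIV_I imageE)
    ultimately show "y = 0"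
      using inner_Aadj[of A y X] by simp
  qed
  then have "inj ((*v) G)"
    by (intro injI) (metis eq_iff_diff_eq_0 matrix_vector_mult_diff_distrib)
  then have "invertible G"
    using matrix_left_invertible_injective invertible_left_inverse by blast
  then have "\<exists>G'. G ** G' = mat 1 \<and> G' ** G = mat 1"
    by (simp add: invertible_def)
  then have "G ** matrix_inv G = mat 1 \<and> matrix_inv G ** G = mat 1"
    unfolding matrix_inv_def by (rule someI_ex)
  then show ?thesis
    by (simp add: G_def)
qed

lemma Aop_Pop:
  assumes "Aop A ` Sn = UNIV"
  shows "Aop A (Pop A X) = Aop A X"
  using gram_matrix_inv[OF assms] by (simp add: Pop_def Aop_Aadj matrix_vector_mul_assoc)

lemma linear_Pop: "linear (Pop A)"
proof -
  have "Pop A = Aadj A \<circ> (\<lambda>y. matrix_inv (\<chi> i j. A i \<bullet> A j) *v y) \<circ> Aop A"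
    by (simp add: Pop_def fun_eq_iff)
  then show ?thesis
    by (simp add: linear_compose linear_Aop linear_Aadj)
qed

lemma Pop_orthogonal: "Aop A ` Sn = UNIV \<Longrightarrow> Pop A U \<bullet> (W - Pop A W) = 0"
  by (simp add: Pop_def inner_Aadj linear_diff[OF linear_Aop] Aop_Pop[unfolded Pop_def])

lemma Pop_in_Sn: "(\<And>i. A i \<in> Sn) \<Longrightarrow> Pop A X \<in> Sn"
  unfolding Pop_def by (rule Aadj_in_Sn)

theorem lemma4p2:
  fixes C :: "real^'n::finite^'n" and A :: "'m::finite \<Rightarrow> real^'n^'n"
    and b :: "real^'m" and \<sigma> :: real and Zbar :: "real^'n^'n"
  assumes C_sym: "C \<in> Sn" and A_sym: "\<And>i. A i \<in> Sn"
    and A1: "Aop A ` Sn = UNIV"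
    and A2: "\<exists>Xsc ysc Ssc. is_KKT C A b Xsc ysc Ssc \<and> rank Xsc + rank Ssc = CARD('n)"
    and sigma_pos: "\<sigma> > 0"
    and Zbar: "Zbar \<in> Z_star \<sigma> C A b"
  defines "T \<equiv> (\<lambda>H. H + delta' A Zbar H)"
  shows "(\<forall>H\<in>Sn. \<forall>G\<in>Sn.
            (norm (T H - T G))\<^sup>2 + (norm ((H - T H) - (G - T G)))\<^sup>2 \<le> (norm (H - G))\<^sup>2)
       \<and> (\<forall>H0\<in>Sn. \<exists>Hs. ((\<lambda>k. (T ^^ k) H0) \<longlonglongrightarrow> Hs) \<and> T Hs = Hs)"
proof -
  obtain X S where "Zbar = X - \<sigma> *\<^sub>R S" "psd X" "psd S"
    using Zbar by (auto simp: Z_star_def X_star_def S_star_def is_KKT_def)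
  then have sym_Zbar: "sym_mat Zbar"
    by (simp add: sym_mat_diff sym_mat_scaleR psd_imp_sym_mat)
  define D where "D = dir_deriv proj_psd Zbar"
  have T_eq: "T H = Pop A H + D H - 2 *\<^sub>R Pop A (D H)" if "H \<in> Sn" for H
  proof -
    have "sym_mat H"
      using that by (simp add: Sn_def)
    then show ?thesis
      unfolding T_def delta'_def Pperp_def dir_deriv_proj_nsd[OF sym_Zbar \<open>sym_mat H\<close>] D_def
      by (simp add: linear_diff[OF linear_Pop] scaleR_2 algebra_simps)
  qed
  have firm: "firmly_nonexpansive_on Sn T"
    using firmly_nonexpansive_on_proj_reflect[OF linear_Pop Pop_orthogonal[OF A1]
        firmly_nonexpansive_dir_deriv_proj_psd[OF sym_Zbar, folded D_def]]
    by (simp add: firmly_nonexpansive_on_cong[OF T_eq])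
  have "T ` Sn \<subseteq> Sn"
    using T_eq Pop_in_Sn[OF A_sym] sym_mat_dir_deriv_proj_psd[OF sym_Zbar]
    by (auto simp: Sn_def D_def intro!: sym_mat_add sym_mat_diff sym_mat_scaleR)
  moreover have "0 \<in> Sn"
    by (simp add: Sn_def sym_mat_0)
  moreover have "T 0 = 0"
    using T_eq[OF \<open>0 \<in> Sn\<close>] by (simp add: D_def dir_deriv_proj_psd_0 linear_0[OF linear_Pop])
  ultimately show ?thesis
    using firm firmly_nonexpansive_on_iterates_converge[OF closed_Sn _ firm]
    unfolding firmly_nonexpansive_on_def by blast
qed

end
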